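(* Let $\beta\in(1,2)$ with $\gamma(\beta)\in\mathbb Q\cap(0,1)$, and let $\gamma_1$ be the left Farey parent of $\gamma(\beta)$. Let $u_{\gamma(\beta)}$ and $u_{\gamma_1}$ be the lexicographically minimal cyclic shifts of $w_{\gamma(\beta)}$ and $w_{\gamma_1}$. Then for all $0<a<b<1$ with $b<u_{\gamma_1}u_{\gamma(\beta)}^\infty$, we have $(a,b)\in D_2(\beta)\cap D_1(\beta)\cap D_0(\beta)$.
   Context: Let $T_\beta(x)=\beta x\bmod1$ on $[0,1)$, $\beta\in(1,2)$. Points are identified with their greedy $\beta$-expansions, i.e. $x=\sum x_i\beta^{-i}$ with $x_i=\lfloor\beta T_\beta^{i-1}x\rfloor$. The order on points agrees with the lexicographic order on expansions. A finite word $u$ followed by a sequence denotes the point with that concatenated expansion, and $w^\infty=www\cdots$. Avoidance set: $J_\beta(a,b)=\{x\in(0,1):T_\beta^n x\notin(a,b)\ \forall n\ge0\}$. An integer $n$ is bad for $(a,b)$ if every periodic orbit of $T_\beta$ of period $n$ meets $(a,b)$. $N_\beta$ is the least $n$ with at least two periodic orbits of period $n$, and $B_\beta(a,b)$ is the set of bad $n>N_\beta$. $D_0(\beta)=\{(a,b):J_\beta(a,b)\ne\emptyset\}$, $D_1(\beta)=\{(a,b):J_\beta(a,b)\text{ uncountable}\}$, $D_2(\beta)=\{(a,b):B_\beta(a,b)\text{ finite}\}$. Farey tree of words: $w_{0/1}=0$ and $w_{1/1}=1$. For neighbours $a/b<c/d$ (meaning $bc-ad=1$), $w_{(a+c)/(b+d)}=w_{c/d}w_{a/b}$.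 The left and right Farey parents of a rational $\gamma\in(0,1)$ are the neighbours $\gamma_1<\gamma_2$ with $\gamma=\gamma_1\oplus\gamma_2:=(a+c)/(b+d)$. $\gamma(\beta)=\sup\{\gamma\in\mathbb Q\cap[0,1]: w_\gamma^\infty \text{ is admissible for }\beta\}$, i.e. the number of the maximal admissible balanced sequence. *)

theory Defs
  imports "HOL-Analysis.Analysis"
begin

definition Tb :: "real \<Rightarrow> real \<Rightarrow> real" where
  "Tb \<beta> x = frac (\<beta> * x)"

text \<open>Greedy digits: digit i (0-based) is x_{i+1} = floor (beta * T^i x).\<close>
definition gdig :: "real \<Rightarrow> real \<Rightarrow> nat \<Rightarrow> nat" where
  "gdig \<beta> x i = nat \<lfloor>\<beta> * (Tb \<beta> ^^ i) x\<rfloor>"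

definition admissible :: "real \<Rightarrow> (nat \<Rightarrow> nat) \<Rightarrow> bool" where
  "admissible \<beta> s \<longleftrightarrow> (\<exists>x. 0 \<le> x \<and> x < 1 \<and> (\<forall>i. gdig \<beta> x i = s i))"

text \<open>The point with expansion s: x = sum s_i beta^{-i} (indices shifted to start at 0).\<close>
definition seqval :: "real \<Rightarrow> (nat \<Rightarrow> nat) \<Rightarrow> real" where
  "seqval \<beta> s = (\<Sum>i. real (s i) / \<beta> ^ (Suc i))"

definition per_seq :: "nat list \<Rightarrow> nat \<Rightarrow> nat" where
  "per_seq w i = w ! (i mod length w)"

definition pre_per_seq :: "nat list \<Rightarrow> nat list \<Rightarrow> nat \<Rightarrow> nat" where
  "pre_per_seq u w i = (if i < length u then u ! i else w ! ((i - length u) mod length w))"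

definition farey_neighbours :: "rat \<Rightarrow> rat \<Rightarrow> bool" where
  "farey_neighbours x y \<longleftrightarrow>
     (let (a, b) = quotient_of x; (c, d) = quotient_of y in b * c - a * d = 1)"

definition farey_mediant :: "rat \<Rightarrow> rat \<Rightarrow> rat" where
  "farey_mediant x y =
     (let (a, b) = quotient_of x; (c, d) = quotient_of y in Fract (a + c) (b + d))"

definition left_parent :: "rat \<Rightarrow> rat" where
  "left_parent g = (THE x. \<exists>y. 0 \<le> x \<and> x < y \<and> y \<le> 1 \<and> farey_neighbours x y \<and> farey_mediant x y = g)"

definition right_parent :: "rat \<Rightarrow> rat" where
  "right_parent g = (THE y. \<exists>x. 0 \<le> x \<and> x < y \<and> y \<le> 1 \<and> farey_neighbours x y \<and> farey_mediant x y = g)"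

text \<open>Recursion w_0 = 0, w_1 = 1, w_{g} = w_{right parent} w_{left parent};
  the fuel argument (the denominator) bounds the recursion depth, since parents have strictly
  smaller denominators.\<close>
fun farey_word_aux :: "nat \<Rightarrow> rat \<Rightarrow> nat list" where
  "farey_word_aux 0 g = []"
| "farey_word_aux (Suc n) g =
     (if g = 0 then [0] else if g = 1 then [1]
      else farey_word_aux n (right_parent g) @ farey_word_aux n (left_parent g))"

definition farey_word :: "rat \<Rightarrow> nat list" where
  "farey_word g = farey_word_aux (nat (snd (quotient_of g))) g"

definition lex_less :: "nat list \<Rightarrow> nat list \<Rightarrow> bool" where
  "lex_less u v \<longleftrightarrow> (\<exists>i. i < length u \<and> i < length v \<and> take i u = take i v \<and> u ! i < v ! i)"

definition min_rot :: "nat list \<Rightarrow> nat list" where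
  "min_rot w = (THE u. u \<in> {rotate k w | k. k < length w} \<and>
                   (\<forall>v \<in> {rotate k w | k. k < length w}. v \<noteq> u \<longrightarrow> lex_less u v))"

definition gamma_beta :: "real \<Rightarrow> real" where
  "gamma_beta \<beta> = Sup {real_of_rat q | q. 0 \<le> q \<and> q \<le> 1 \<and> admissible \<beta> (per_seq (farey_word q))}"

definition J_set :: "real \<Rightarrow> real \<Rightarrow> real \<Rightarrow> real set" where
  "J_set \<beta> a b = {x. 0 < x \<and> x < 1 \<and> (\<forall>n. (Tb \<beta> ^^ n) x \<notin> {a<..<b})}"

definition periodic_pt :: "real \<Rightarrow> nat \<Rightarrow> real \<Rightarrow> bool" where
  "periodic_pt \<beta> n x \<longleftrightarrow> 0 \<le> x \<and> x < 1 \<and> 0 < n \<and> (Tb \<beta> ^^ n) x = x \<and>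
      (\<forall>m. 0 < m \<and> m < n \<longrightarrow> (Tb \<beta> ^^ m) x \<noteq> x)"

definition orbit :: "real \<Rightarrow> real \<Rightarrow> real set" where
  "orbit \<beta> x = {(Tb \<beta> ^^ k) x | k. True}"

definition N_beta :: "real \<Rightarrow> nat" where
  "N_beta \<beta> = (LEAST n. \<exists>x y. periodic_pt \<beta> n x \<and> periodic_pt \<beta> n y \<and> orbit \<beta> x \<noteq> orbit \<beta> y)"

definition bad :: "real \<Rightarrow> real \<Rightarrow> real \<Rightarrow> nat \<Rightarrow> bool" where
  "bad \<beta> a b n \<longleftrightarrow> (\<forall>x. periodic_pt \<beta> n x \<longrightarrow> orbit \<beta> x \<inter> {a<..<b} \<noteq> {})"

definition B_set :: "real \<Rightarrow> real \<Rightarrow> real \<Rightarrow> nat set" where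
  "B_set \<beta> a b = {n. N_beta \<beta> < n \<and> bad \<beta> a b n}"

definition D0 :: "real \<Rightarrow> (real \<times> real) set" where
  "D0 \<beta> = {(a, b). J_set \<beta> a b \<noteq> {}}"

definition D1 :: "real \<Rightarrow> (real \<times> real) set" where
  "D1 \<beta> = {(a, b). uncountable (J_set \<beta> a b)}"

definition D2 :: "real \<Rightarrow> (real \<times> real) set" where
  "D2 \<beta> = {(a, b). finite (B_set \<beta> a b)}"

end

theory Submission
  imports Defs "HOL-Number_Theory.Totient"
begin

text \<open>For a rational slope q the Farey word w_q is the upper Christoffel word of q and u_q the lower
  one, so u_{\<gamma>1} u_\<gamma>^\<infinity> is the lower mechanical word of \<gamma>1 followed by that of \<gamma>, whose
  partial sums stay below j \<gamma> - 1/Q, Q the denominator of \<gamma>. Values of binary sequences are compared through their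
  partial sums (Abel summation). Hence for every slope \<alpha> slightly below \<gamma> all tails of the lower
  mechanical word of \<alpha> have value above b; they have value below 1 because they are dominated by
  an admissible Farey word of slope above \<alpha>, which exists by the definition of \<gamma>(\<beta>). So the
  orbits of these points never enter (a, b). Different slopes give different points, hence J is
  uncountable; and for every large n a slope m/n in the window with m coprime to n (found by
  Legendre's sieve) gives a periodic orbit of least period n avoiding (a, b), hence B is finite.\<close>

section \<open>Values of binary digit sequences\<close>

definition shift :: "nat \<Rightarrow> (nat \<Rightarrow> nat) \<Rightarrow> nat \<Rightarrow> nat" where
  "shift k s = (\<lambda>i. s (i + k))"

definition binary :: "(nat \<Rightarrow> nat) \<Rightarrow> bool" where
  "binary s \<longleftrightarrow> (\<forall>i. s i \<le> 1)"

definition psum :: "(nat \<Rightarrow> nat) \<Rightarrow> nat \<Rightarrow> real" where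
  "psum s n = (\<Sum>i<n. real (s i))"

lemma shift_shift [simp]: "shift k (shift l s) = shift (k + l) s"
  by (simp add: shift_def ac_simps)

lemma shift_0 [simp]: "shift 0 s = s"
  by (simp add: shift_def)

lemma binary_shift: "binary s \<Longrightarrow> binary (shift k s)"
  by (simp add: binary_def shift_def)

lemma psum_0 [simp]: "psum s 0 = 0"
  by (simp add: psum_def)

lemma psum_Suc: "psum s (Suc n) = psum s n + real (s n)"
  by (simp add: psum_def)

lemma psum_add: "psum s (k + n) = psum s k + psum (shift k s) n"
  by (induction n) (simp_all add: psum_Suc shift_def add.commute)

lemma summable_seqval:
  assumes "1 < \<beta>" "binary s"
  shows "summable (\<lambda>i. real (s i) / \<beta> ^ Suc i)"
proof (rule summable_comparison_test)
  show "\<exists>N. \<forall>n\<ge>N. norm (real (s n) / \<beta> ^ Suc n) \<le> (1 / \<beta>) ^ Suc n"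
    using assms by (auto simp: binary_def power_divide intro!: divide_right_mono)
  show "summable (\<lambda>i. (1 / \<beta>) ^ Suc i)"
    using assms by (intro summable_ignore_initial_segment[where k=1, simplified] summable_geometric) auto
qed

lemma seqval_sums:
  "1 < \<beta> \<Longrightarrow> binary s \<Longrightarrow> (\<lambda>i. real (s i) / \<beta> ^ Suc i) sums seqval \<beta> s"
  using summable_seqval by (simp add: seqval_def summable_sums)

lemma seqval_nonneg: "1 < \<beta> \<Longrightarrow> binary s \<Longrightarrow> 0 \<le> seqval \<beta> s"
  unfolding seqval_def by (intro suminf_nonneg summable_seqval) auto

lemma seqval_le:
  assumes "1 < \<beta>" "binary s"
  shows "seqval \<beta> s \<le> 1 / (\<beta> - 1)"
proof -
  have "(\<lambda>i. 1 / \<beta> * (1 / \<beta>) ^ i) sums (1 / \<beta> * (1 / (1 - 1 / \<beta>)))"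
    using assms by (intro sums_mult geometric_sums) auto
  moreover have "1 / \<beta> * (1 / (1 - 1 / \<beta>)) = 1 / (\<beta> - 1)"
    using assms by (simp add: field_simps)
  ultimately have "(\<lambda>i. 1 / \<beta> ^ Suc i) sums (1 / (\<beta> - 1))"
    by (simp add: power_one_over)
  then show ?thesis
    using seqval_sums[OF assms] assms
    by (elim sums_le[rotated 1]) (auto simp: binary_def intro!: divide_right_mono)
qed

lemma seqval_split:
  assumes "1 < \<beta>" "binary s"
  shows "seqval \<beta> s = (\<Sum>i<k. real (s i) / \<beta> ^ Suc i) + seqval \<beta> (shift k s) / \<beta> ^ k"
proof -
  have "seqval \<beta> s = (\<Sum>n. real (s (n + k)) / \<beta> ^ Suc (n + k)) + (\<Sum>i<k. real (s i) / \<beta> ^ Suc i)"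
    unfolding seqval_def using suminf_split_initial_segment[OF summable_seqval[OF assms], of k] by simp
  also have "(\<Sum>n. real (s (n + k)) / \<beta> ^ Suc (n + k)) = (\<Sum>n. (real (s (n + k)) / \<beta> ^ Suc n) / \<beta> ^ k)"
    by (simp add: power_add mult_ac)
  also have "\<dots> = (\<Sum>n. real (s (n + k)) / \<beta> ^ Suc n) / \<beta> ^ k"
    using summable_seqval[OF assms(1) binary_shift[OF assms(2), of k]]
    by (intro suminf_divide) (simp add: shift_def)
  finally show ?thesis by (simp add: seqval_def shift_def)
qed

lemma seqval_shift_1:
  assumes "1 < \<beta>" "binary s"
  shows "\<beta> * seqval \<beta> s = real (s 0) + seqval \<beta> (shift 1 s)"
  using seqval_split[OF assms, of 1] assms by (simp add: field_simps)

text \<open>Abel summation: the value of a digit sequence is an average of its partial sums, which makes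
  domination of partial sums enough for comparing values.\<close>

lemma weighted_diff_abel:
  assumes "\<beta> \<noteq> 0"
  shows "(\<Sum>i<n. (real (t i) - real (s i)) / \<beta> ^ Suc i) =
         (1 - 1 / \<beta>) * (\<Sum>j<n. (psum t j - psum s j) / \<beta> ^ j) + (psum t n - psum s n) / \<beta> ^ n"
proof (induction n)
  case (Suc n)
  have "(1 - 1 / \<beta>) * ((psum t n - psum s n) / \<beta> ^ n)
          + (psum t (Suc n) - psum s (Suc n)) / \<beta> ^ Suc n - (psum t n - psum s n) / \<beta> ^ n
        = (real (t n) - real (s n)) / \<beta> ^ Suc n"
    using assms by (simp add: psum_Suc field_simps)
  then show ?case
    using Suc by (simp add: algebra_simps)
qed simp

lemma seqval_diff_tendsto:
  assumes "1 < \<beta>" "binary s" "binary t"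
  shows "(\<lambda>n. \<Sum>i<n. (real (t i) - real (s i)) / \<beta> ^ Suc i) \<longlonglongrightarrow> seqval \<beta> t - seqval \<beta> s"
  using sums_diff[OF seqval_sums[OF assms(1,3)] seqval_sums[OF assms(1,2)]]
  by (simp add: sums_def diff_divide_distrib)

lemma seqval_strict_mono_psum:
  assumes "1 < \<beta>" "binary s" "binary t" and le: "\<And>n. psum s n \<le> psum t n"
    and lt: "psum s j < psum t j"
  shows "seqval \<beta> s < seqval \<beta> t"
proof -
  have "\<beta> \<noteq> 0" using assms(1) by simp
  define c where "c = (1 - 1 / \<beta>) * ((psum t j - psum s j) / \<beta> ^ j)"
  have "0 < c"
    unfolding c_def using assms(1) lt by (intro mult_pos_pos divide_pos_pos) auto
  moreover have "c \<le> seqval \<beta> t - seqval \<beta> s"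
  proof (rule LIMSEQ_le_const[OF seqval_diff_tendsto[OF assms(1-3)]], intro exI allI impI)
    fix n assume n: "Suc j \<le> n"
    have nonneg: "\<And>j. 0 \<le> (psum t j - psum s j) / \<beta> ^ j"
      using assms(1) le by simp
    then have "(psum t j - psum s j) / \<beta> ^ j \<le> (\<Sum>j<n. (psum t j - psum s j) / \<beta> ^ j)"
      using n by (intro member_le_sum) auto
    then have "c \<le> (1 - 1 / \<beta>) * (\<Sum>j<n. (psum t j - psum s j) / \<beta> ^ j)"
      unfolding c_def using assms(1) by (intro mult_left_mono) auto
    then show "c \<le> (\<Sum>i<n. (real (t i) - real (s i)) / \<beta> ^ Suc i)"
      unfolding weighted_diff_abel[OF \<open>\<beta> \<noteq> 0\<close>] using nonneg[of n] by simp
  qed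
  ultimately show ?thesis by simp
qed

lemma seqval_mono_psum:
  assumes "1 < \<beta>" "binary s" "binary t" and le: "\<And>n. psum s n \<le> psum t n"
  shows "seqval \<beta> s \<le> seqval \<beta> t"
proof -
  have "\<beta> \<noteq> 0" using assms(1) by simp
  have "0 \<le> seqval \<beta> t - seqval \<beta> s"
  proof (rule LIMSEQ_le_const[OF seqval_diff_tendsto[OF assms(1-3)]], intro exI allI impI)
    fix n
    have "0 \<le> (1 - 1 / \<beta>) * (\<Sum>j<n. (psum t j - psum s j) / \<beta> ^ j) + (psum t n - psum s n) / \<beta> ^ n"
      using assms(1) le by (intro add_nonneg_nonneg mult_nonneg_nonneg sum_nonneg) auto
    then show "0 \<le> (\<Sum>i<n. (real (t i) - real (s i)) / \<beta> ^ Suc i)"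
      unfolding weighted_diff_abel[OF \<open>\<beta> \<noteq> 0\<close>] .
  qed
  then show ?thesis by simp
qed

lemma funpow_Tb_range:
  assumes "0 \<le> x" "x < 1"
  shows "0 \<le> (Tb \<beta> ^^ k) x \<and> (Tb \<beta> ^^ k) x < 1"
  using assms by (cases k) (simp_all add: Tb_def frac_lt_1)

lemma seqval_greedy:
  assumes "1 < \<beta>" "binary s" and tails: "\<And>k. seqval \<beta> (shift k s) < 1"
  shows "(Tb \<beta> ^^ k) (seqval \<beta> s) = seqval \<beta> (shift k s) \<and> gdig \<beta> (seqval \<beta> s) k = s k"
proof -
  have floor_tail: "\<lfloor>\<beta> * seqval \<beta> (shift k s)\<rfloor> = int (s k)"
    and frac_tail: "Tb \<beta> (seqval \<beta> (shift k s)) = seqval \<beta> (shift (Suc k) s)" for k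
  proof -
    have step: "\<beta> * seqval \<beta> (shift k s) = real (s k) + seqval \<beta> (shift (Suc k) s)"
      using seqval_shift_1[OF assms(1) binary_shift[OF assms(2)], of k] by (simp add: shift_def)
    have "\<lfloor>seqval \<beta> (shift (Suc k) s)\<rfloor> = 0"
      using seqval_nonneg[OF assms(1) binary_shift[OF assms(2)]] tails by (simp add: floor_eq_iff)
    then show "\<lfloor>\<beta> * seqval \<beta> (shift k s)\<rfloor> = int (s k)"
      and "Tb \<beta> (seqval \<beta> (shift k s)) = seqval \<beta> (shift (Suc k) s)"
      by (simp_all add: step Tb_def frac_def)
  qed
  have orbit: "(Tb \<beta> ^^ k) (seqval \<beta> s) = seqval \<beta> (shift k s)" for k
    by (induction k) (simp_all add: frac_tail)
  show ?thesis
    using orbit floor_tail by (simp add: gdig_def)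
qed

lemma admissible_seqval:
  assumes "1 < \<beta>" "binary s" "\<And>k. seqval \<beta> (shift k s) < 1"
  shows "admissible \<beta> s"
  unfolding admissible_def
  using seqval_greedy[OF assms] seqval_nonneg[OF assms(1,2)] assms(3)[of 0] by auto

lemma greedy_digit_step:
  assumes "1 < \<beta>" "\<beta> < 2" "0 \<le> x" "x < 1"
  shows "gdig \<beta> x k \<le> 1 \<and> \<beta> * (Tb \<beta> ^^ k) x = real (gdig \<beta> x k) + (Tb \<beta> ^^ Suc k) x"
proof -
  define y where "y = (Tb \<beta> ^^ k) x"
  have "0 \<le> y" "y < 1"
    unfolding y_def using funpow_Tb_range[OF assms(3,4)] by auto
  then have "0 \<le> \<beta> * y" "\<beta> * y < 2"
    using assms(1,2) mult_strict_mono[of \<beta> 2 y 1] by auto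
  then have "\<lfloor>\<beta> * y\<rfloor> = 0 \<or> \<lfloor>\<beta> * y\<rfloor> = 1"
    by linarith
  then show ?thesis
    unfolding gdig_def y_def[symmetric] by (auto simp: Tb_def frac_def y_def)
qed

lemma admissible_imp_seqval_less_1:
  assumes "1 < \<beta>" "\<beta> < 2" and "admissible \<beta> t"
  shows "binary t \<and> seqval \<beta> t < 1"
proof -
  obtain x where x: "0 \<le> x" "x < 1" and digits: "\<And>i. gdig \<beta> x i = t i"
    using assms(3) unfolding admissible_def by auto
  have bin: "binary t"
    using greedy_digit_step[OF assms(1,2) x] digits by (auto simp: binary_def)
  have expansion: "x = (\<Sum>i<n. real (t i) / \<beta> ^ Suc i) + (Tb \<beta> ^^ n) x / \<beta> ^ n" for n
  proof (induction n)
    case (Suc n)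
    have "\<beta> * (Tb \<beta> ^^ n) x = real (t n) + (Tb \<beta> ^^ Suc n) x"
      using greedy_digit_step[OF assms(1,2) x, of n] digits by simp
    then have "(Tb \<beta> ^^ n) x / \<beta> ^ n = real (t n) / \<beta> ^ Suc n + (Tb \<beta> ^^ Suc n) x / \<beta> ^ Suc n"
      using assms(1) by (simp add: field_simps)
    then show ?case using Suc by simp
  qed simp
  have "(\<lambda>n. (Tb \<beta> ^^ n) x / \<beta> ^ n) \<longlonglongrightarrow> 0"
  proof (rule Lim_null_comparison)
    have "norm ((Tb \<beta> ^^ n) x / \<beta> ^ n) \<le> (1 / \<beta>) ^ n" for n
      using funpow_Tb_range[OF x, where k=n and \<beta>=\<beta>] assms(1) by (simp add: power_divide divide_right_mono)
    then show "\<forall>\<^sub>F n in sequentially. norm ((Tb \<beta> ^^ n) x / \<beta> ^ n) \<le> (1 / \<beta>) ^ n"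
      by simp
    show "(\<lambda>n. (1 / \<beta>) ^ n) \<longlonglongrightarrow> 0"
      using assms(1) by (intro LIMSEQ_power_zero) auto
  qed
  then have "(\<lambda>n. x - (Tb \<beta> ^^ n) x / \<beta> ^ n) \<longlonglongrightarrow> x"
    using tendsto_diff[of "\<lambda>_. x" x sequentially] by fastforce
  moreover have "(\<lambda>n. x - (Tb \<beta> ^^ n) x / \<beta> ^ n) = (\<lambda>n. \<Sum>i<n. real (t i) / \<beta> ^ Suc i)"
    using expansion by (auto simp: algebra_simps)
  ultimately have "(\<lambda>n. \<Sum>i<n. real (t i) / \<beta> ^ Suc i) \<longlonglongrightarrow> x"
    by simp
  then have "seqval \<beta> t = x"
    using seqval_sums[OF assms(1) bin] by (simp add: sums_def LIMSEQ_unique)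
  then show ?thesis using bin x by simp
qed

section \<open>Mechanical words\<close>

text \<open>For a rational slope their first Q
  letters are the Christoffel words: the Farey word w_q is the upper one and its least rotation u_q
  the lower one.\<close>

definition upper_mech :: "real \<Rightarrow> nat \<Rightarrow> nat" where
  "upper_mech \<alpha> i = nat (\<lceil>real (Suc i) * \<alpha>\<rceil> - \<lceil>real i * \<alpha>\<rceil>)"

definition lower_mech :: "real \<Rightarrow> nat \<Rightarrow> nat" where
  "lower_mech \<alpha> i = nat (\<lfloor>real (Suc i) * \<alpha>\<rfloor> - \<lfloor>real i * \<alpha>\<rfloor>)"

definition upper_word :: "rat \<Rightarrow> nat list" where
  "upper_word q = map (upper_mech (of_rat q)) [0..<nat (snd (quotient_of q))]"

definition lower_word :: "rat \<Rightarrow> nat list" where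
  "lower_word q = map (lower_mech (of_rat q)) [0..<nat (snd (quotient_of q))]"

lemma floor_le_ceiling_add_diff: "\<lfloor>x\<rfloor> \<le> \<lceil>x + y\<rceil> - \<lceil>y\<rceil>" for x y :: real
proof -
  have "of_int \<lfloor>x\<rfloor> < (of_int \<lceil>x + y\<rceil> - of_int \<lceil>y\<rceil> + 1 :: real)"
    using le_of_int_ceiling[of "x + y"] ceiling_correct[of y] of_int_floor_le[of x] by linarith
  then have "of_int \<lfloor>x\<rfloor> < (of_int (\<lceil>x + y\<rceil> - \<lceil>y\<rceil> + 1) :: real)"
    by simp
  then show ?thesis by (simp only: of_int_less_iff)
qed

lemma floor_add_diff_le_ceiling: "\<lfloor>x + y\<rfloor> - \<lfloor>y\<rfloor> \<le> \<lceil>x\<rceil>" for x y :: real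
proof -
  have "of_int \<lfloor>x + y\<rfloor> < (of_int \<lceil>x\<rceil> + of_int \<lfloor>y\<rfloor> + 1 :: real)"
    using le_of_int_ceiling[of x] floor_correct[of y] of_int_floor_le[of "x + y"] by linarith
  then have "of_int \<lfloor>x + y\<rfloor> < (of_int (\<lceil>x\<rceil> + \<lfloor>y\<rfloor> + 1) :: real)"
    by simp
  then show ?thesis by (simp only: of_int_less_iff)
qed

lemma sum_upper_mech:
  assumes "0 \<le> \<alpha>"
  shows "(\<Sum>j<i. int (upper_mech \<alpha> (k + j))) = \<lceil>real (k + i) * \<alpha>\<rceil> - \<lceil>real k * \<alpha>\<rceil>"
proof (induction i)
  case (Suc i)
  have "\<lceil>real (k + i) * \<alpha>\<rceil> \<le> \<lceil>real (Suc (k + i)) * \<alpha>\<rceil>"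
    using assms by (intro ceiling_mono mult_right_mono) auto
  then show ?case using Suc by (simp add: upper_mech_def)
qed simp

lemma sum_lower_mech:
  assumes "0 \<le> \<alpha>"
  shows "(\<Sum>j<i. int (lower_mech \<alpha> (k + j))) = \<lfloor>real (k + i) * \<alpha>\<rfloor> - \<lfloor>real k * \<alpha>\<rfloor>"
proof (induction i)
  case (Suc i)
  have "\<lfloor>real (k + i) * \<alpha>\<rfloor> \<le> \<lfloor>real (Suc (k + i)) * \<alpha>\<rfloor>"
    using assms by (intro floor_mono mult_right_mono) auto
  then show ?case using Suc by (simp add: lower_mech_def)
qed simp

lemma psum_shift_lower_mech:
  assumes "0 \<le> \<alpha>"
  shows "psum (shift k (lower_mech \<alpha>)) n = of_int (\<lfloor>real (k + n) * \<alpha>\<rfloor> - \<lfloor>real k * \<alpha>\<rfloor>)"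
proof -
  have "(\<Sum>j<n. real (lower_mech \<alpha> (k + j))) = of_int (\<Sum>j<n. int (lower_mech \<alpha> (k + j)))"
    by simp
  then have "(\<Sum>j<n. real (lower_mech \<alpha> (k + j))) = of_int (\<lfloor>real (k + n) * \<alpha>\<rfloor> - \<lfloor>real k * \<alpha>\<rfloor>)"
    unfolding sum_lower_mech[OF assms] .
  then show ?thesis
    by (simp add: psum_def shift_def add.commute)
qed

lemma psum_lower_mech: "0 \<le> \<alpha> \<Longrightarrow> psum (lower_mech \<alpha>) n = of_int \<lfloor>real n * \<alpha>\<rfloor>"
  using psum_shift_lower_mech[of \<alpha> 0 n] by simp

lemma binary_lower_mech:
  assumes "0 \<le> \<alpha>" "\<alpha> \<le> 1"
  shows "binary (lower_mech \<alpha>)"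
proof -
  have "\<lceil>\<alpha>\<rceil> \<le> 1"
    using assms by (simp add: ceiling_le_iff)
  then have "\<lfloor>\<alpha> + real i * \<alpha>\<rfloor> - \<lfloor>real i * \<alpha>\<rfloor> \<le> 1" for i
    using floor_add_diff_le_ceiling[of \<alpha> "real i * \<alpha>"] by linarith
  then show ?thesis
    by (simp add: binary_def lower_mech_def algebra_simps nat_le_iff)
qed

lemma lower_mech_strict_mono:
  assumes "1 < \<beta>" "0 \<le> \<alpha>" "\<alpha> < \<alpha>'" "\<alpha>' \<le> 1"
  shows "seqval \<beta> (lower_mech \<alpha>) < seqval \<beta> (lower_mech \<alpha>')"
proof -
  obtain n :: nat where n: "1 / (\<alpha>' - \<alpha>) < real n"
    using reals_Archimedean2 by blast
  then have "real n * \<alpha> + 1 \<le> real n * \<alpha>'"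
    using assms(3) by (simp add: field_simps)
  then have "\<lfloor>real n * \<alpha>\<rfloor> < \<lfloor>real n * \<alpha>'\<rfloor>"
    by linarith
  moreover have "\<lfloor>real m * \<alpha>\<rfloor> \<le> \<lfloor>real m * \<alpha>'\<rfloor>" for m
    using assms by (intro floor_mono mult_left_mono) auto
  ultimately show ?thesis
    using assms by (intro seqval_strict_mono_psum[where j=n] binary_lower_mech) (simp_all add: psum_lower_mech)
qed

lemma of_rat_quotient: "quotient_of q = (P, Q) \<Longrightarrow> (of_rat q :: real) = of_int P / of_int Q"
  using quotient_of_div[of q P Q] by (simp add: of_rat_divide)

lemma denominator_times_of_rat: "quotient_of q = (P, Q) \<Longrightarrow> real (nat Q) * of_rat q = of_int P"
  using of_rat_quotient[of q P Q] quotient_of_denom_pos[of q P Q] by simp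

lemma upper_mech_mod:
  assumes "quotient_of q = (P, Q)"
  shows "upper_mech (of_rat q) (i mod nat Q) = upper_mech (of_rat q) i"
proof -
  define k t where "k = i mod nat Q" and "t = i div nat Q"
  have shift_period: "real (m + nat Q * t) * of_rat q = real m * of_rat q + of_int (P * int t)" for m
    using denominator_times_of_rat[OF assms] by (simp add: algebra_simps)
  have "\<lceil>real (Suc k + nat Q * t) * of_rat q\<rceil> = \<lceil>real (Suc k) * (of_rat q :: real)\<rceil> + P * int t"
    "\<lceil>real (k + nat Q * t) * of_rat q\<rceil> = \<lceil>real k * (of_rat q :: real)\<rceil> + P * int t"
    unfolding shift_period by (rule ceiling_add_of_int)+
  moreover have "i = k + nat Q * t" "Suc i = Suc k + nat Q * t"
    unfolding k_def t_def by simp_all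
  ultimately show ?thesis
    unfolding upper_mech_def k_def[symmetric] by simp
qed

lemma lower_mech_mod:
  assumes "quotient_of q = (P, Q)"
  shows "lower_mech (of_rat q) (i mod nat Q) = lower_mech (of_rat q) i"
proof -
  define k t where "k = i mod nat Q" and "t = i div nat Q"
  have shift_period: "real (m + nat Q * t) * of_rat q = real m * of_rat q + of_int (P * int t)" for m
    using denominator_times_of_rat[OF assms] by (simp add: algebra_simps)
  have "\<lfloor>real (Suc k + nat Q * t) * of_rat q\<rfloor> = \<lfloor>real (Suc k) * (of_rat q :: real)\<rfloor> + P * int t"
    "\<lfloor>real (k + nat Q * t) * of_rat q\<rfloor> = \<lfloor>real k * (of_rat q :: real)\<rfloor> + P * int t"
    unfolding shift_period by (rule floor_add_int[symmetric])+
  moreover have "i = k + nat Q * t" "Suc i = Suc k + nat Q * t"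
    unfolding k_def t_def by simp_all
  ultimately show ?thesis
    unfolding lower_mech_def k_def[symmetric] by simp
qed

lemma length_upper_word: "length (upper_word q) = nat (snd (quotient_of q))"
  by (simp add: upper_word_def)

lemma length_lower_word: "length (lower_word q) = nat (snd (quotient_of q))"
  by (simp add: lower_word_def)

lemma nth_upper_word: "j < nat (snd (quotient_of q)) \<Longrightarrow> upper_word q ! j = upper_mech (of_rat q) j"
  by (simp add: upper_word_def)

lemma nth_lower_word: "j < nat (snd (quotient_of q)) \<Longrightarrow> lower_word q ! j = lower_mech (of_rat q) j"
  by (simp add: lower_word_def)

lemma per_seq_upper_word: "per_seq (upper_word q) = upper_mech (of_rat q)"
proof
  fix i
  obtain P Q where q: "quotient_of q = (P, Q)" by (cases "quotient_of q")
  then have "0 < nat Q" using quotient_of_denom_pos[OF q] by simp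
  then show "per_seq (upper_word q) i = upper_mech (of_rat q) i"
    using upper_mech_mod[OF q] by (simp add: per_seq_def length_upper_word nth_upper_word q)
qed

lemma psum_per_seq_upper_word:
  assumes "0 \<le> q"
  shows "psum (per_seq (upper_word q)) n = of_int \<lceil>real n * of_rat q\<rceil>"
proof -
  have "(\<Sum>j<n. real (upper_mech (of_rat q) j)) = of_int (\<Sum>j<n. int (upper_mech (of_rat q) (0 + j)))"
    by simp
  then have "(\<Sum>j<n. real (upper_mech (of_rat q) j)) = of_int \<lceil>real n * (of_rat q :: real)\<rceil>"
    unfolding sum_upper_mech[where k=0, OF of_rat_less_eq[THEN iffD2, OF assms, unfolded of_rat_0]] by simp
  then show ?thesis
    by (simp add: psum_def per_seq_upper_word)
qed

lemma ceiling_divide_succ: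
  assumes "(0::int) < Q"
  shows "\<lceil>(of_int (n + 1) / of_int Q :: real)\<rceil> = n div Q + 1"
proof -
  have "n = n div Q * Q + n mod Q" "0 \<le> n mod Q" "n mod Q < Q"
    using assms by simp_all
  then have "n div Q * Q < n + 1" "n + 1 \<le> (n div Q + 1) * Q"
    by (simp_all add: distrib_right, linarith+)
  then have "of_int (n div Q) * of_int Q < (of_int (n + 1) :: real)"
    "of_int (n + 1) \<le> of_int (n div Q + 1) * (of_int Q :: real)"
    by (simp_all only: of_int_mult[symmetric] of_int_less_iff of_int_le_iff)
  then show ?thesis
    using assms by (simp add: ceiling_eq_iff pos_less_divide_eq pos_divide_le_eq)
qed

text \<open>For a rational slope with denominator Q, the upper word rotated by the inverse of the
  numerator modulo Q is the lower word.\<close>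

lemma upper_mech_rotate_eq_lower_mech:
  assumes "0 \<le> q" and q: "quotient_of q = (P, Q)"
  obtains k where "k < nat Q" "\<And>i. upper_mech (of_rat q) (k + i) = lower_mech (of_rat q) i"
proof (cases "P = 0")
  case True
  then show ?thesis
    using that[of 0] quotient_of_denom_pos[OF q] of_rat_quotient[OF q]
    by (simp add: upper_mech_def lower_mech_def)
next
  case False
  have Q: "0 < Q" using quotient_of_denom_pos[OF q] .
  obtain u v where uv: "u * P + v * Q = 1"
    using bezout_int[of P Q] quotient_of_coprime[OF q] by (auto simp: coprime_iff_gcd_eq_1)
  define k where "k = nat (u mod Q)"
  define t where "t = - v - (u div Q) * P"
  have k: "int k = u mod Q" "k < nat Q"
    unfolding k_def using Q by auto
  have kP: "int k * P = 1 + Q * t"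
    using uv unfolding k t_def by (simp add: algebra_simps mod_div_mult_eq minus_div_mult_eq_mod[symmetric])
  have ceil: "\<lceil>real (k + i) * of_rat q\<rceil> = \<lfloor>real i * of_rat q\<rfloor> + 1 + t" for i
  proof -
    have "(int k + int i) * P = (int i * P + 1) + Q * t"
      using kP by (simp add: algebra_simps)
    then have "real (k + i) * (of_rat q :: real) = of_int ((int i * P + 1) + Q * t) / of_int Q"
      unfolding of_rat_quotient[OF q] by (metis of_int_mult of_int_of_nat_eq of_nat_add times_divide_eq_right)
    then have "real (k + i) * (of_rat q :: real) = of_int (int i * P + 1) / of_int Q + of_int t"
      using Q by (simp add: field_simps)
    then have "\<lceil>real (k + i) * (of_rat q :: real)\<rceil> = \<lceil>(of_int (int i * P + 1) / of_int Q :: real)\<rceil> + t"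
      by simp
    also have "\<dots> = (int i * P) div Q + 1 + t"
      by (simp only: ceiling_divide_succ[OF Q])
    also have "(int i * P) div Q = \<lfloor>real i * of_rat q\<rfloor>"
      unfolding of_rat_quotient[OF q] using floor_divide_of_int_eq[of "int i * P" Q, where 'a=real] by simp
    finally show ?thesis .
  qed
  have "upper_mech (of_rat q) (k + i) = lower_mech (of_rat q) i" for i
    using ceil[of i] ceil[of "Suc i"] by (simp add: upper_mech_def lower_mech_def)
  then show ?thesis
    using that k(2) by blast
qed

lemma lex_less_asym: "lex_less u v \<Longrightarrow> \<not> lex_less v u"
proof
  assume "lex_less u v" "lex_less v u"
  then obtain i j where i: "i < length u" "i < length v" "take i u = take i v" "u ! i < v ! i"
    and j: "j < length v" "j < length u" "take j v = take j u" "v ! j < u ! j"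
    unfolding lex_less_def by blast
  show False
  proof (cases i j rule: linorder_cases)
    case less
    then have "take j v ! i = v ! i" "take j u ! i = u ! i" by simp_all
    then show False using j(3) i(4) by simp
  next
    case equal
    then show False using i j by simp
  next
    case greater
    then have "take i v ! j = v ! j" "take i u ! j = u ! j" by simp_all
    then show False using i(3) j(4) by simp
  qed
qed

lemma lex_less_if_prefix_sums_le:
  assumes len: "length u = length v" and "u \<noteq> v"
    and sums: "\<And>i. i \<le> length u \<Longrightarrow> (\<Sum>j<i. int (u ! j)) \<le> (\<Sum>j<i. int (v ! j))"
  shows "lex_less u v"
proof -
  have ex: "\<exists>i. i < length u \<and> u ! i \<noteq> v ! i"
    using assms(1,2) nth_equalityI by blast
  define i where "i = (LEAST i. i < length u \<and> u ! i \<noteq> v ! i)"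
  have i: "i < length u" "u ! i \<noteq> v ! i"
    using LeastI_ex[OF ex] unfolding i_def by auto
  have before: "u ! j = v ! j" if "j < i" for j
    using not_less_Least[of j "\<lambda>i. i < length u \<and> u ! i \<noteq> v ! i"] that i
    unfolding i_def[symmetric] by auto
  then have "(\<Sum>j<i. int (u ! j)) = (\<Sum>j<i. int (v ! j))"
    by (intro sum.cong) auto
  then have "u ! i < v ! i"
    using sums[of "Suc i"] i by simp
  moreover have "take i u = take i v"
    using before i len by (intro nth_equalityI) auto
  ultimately show ?thesis
    unfolding lex_less_def using i len by auto
qed

lemma nth_rotate_upper_word:
  assumes "quotient_of q = (P, Q)" "i < nat Q"
  shows "rotate k (upper_word q) ! i = upper_mech (of_rat q) (k + i)"
  using assms upper_mech_mod[OF assms(1), of "k + i"]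
  by (simp add: nth_rotate nth_upper_word length_upper_word)

text \<open>The lower word has the smallest prefix sums among all rotations of the upper word.\<close>

lemma lex_less_lower_word_rotate:
  assumes "0 \<le> q" and ne: "lower_word q \<noteq> rotate k (upper_word q)"
  shows "lex_less (lower_word q) (rotate k (upper_word q))"
proof -
  obtain P Q where q: "quotient_of q = (P, Q)" by (cases "quotient_of q")
  let ?x = "of_rat q :: real"
  have x: "0 \<le> ?x" using assms by simp
  have len: "length (lower_word q) = nat Q" "length (upper_word q) = nat Q"
    using q by (simp_all add: length_upper_word length_lower_word)
  show ?thesis
  proof (rule lex_less_if_prefix_sums_le)
    show "length (lower_word q) = length (rotate k (upper_word q))"
      using len by simp
    fix i assume i: "i \<le> length (lower_word q)"
    have "(\<Sum>j<i. int (lower_word q ! j)) = (\<Sum>j<i. int (lower_mech ?x (0 + j)))"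
      using i len q by (intro sum.cong) (auto simp: nth_lower_word)
    also have "\<dots> = \<lfloor>real (0 + i) * ?x\<rfloor> - \<lfloor>real 0 * ?x\<rfloor>"
      by (rule sum_lower_mech[OF x])
    also have "\<dots> = \<lfloor>real i * ?x\<rfloor>"
      by simp
    also have "\<dots> \<le> \<lceil>real (k + i) * ?x\<rceil> - \<lceil>real k * ?x\<rceil>"
      using floor_le_ceiling_add_diff[of "real i * ?x" "real k * ?x"] by (simp add: algebra_simps)
    also have "\<dots> = (\<Sum>j<i. int (upper_mech ?x (k + j)))"
      using sum_upper_mech[OF x] by simp
    also have "\<dots> = (\<Sum>j<i. int (rotate k (upper_word q) ! j))"
      using i len nth_rotate_upper_word[OF q] by (intro sum.cong) auto
    finally show "(\<Sum>j<i. int (lower_word q ! j)) \<le> (\<Sum>j<i. int (rotate k (upper_word q) ! j))" .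
  qed (use ne in simp)
qed

lemma min_rot_upper_word:
  assumes "0 \<le> q"
  shows "min_rot (upper_word q) = lower_word q"
proof -
  obtain P Q where q: "quotient_of q = (P, Q)" by (cases "quotient_of q")
  let ?R = "{rotate k (upper_word q) | k. k < length (upper_word q)}"
  have len: "length (upper_word q) = nat Q" "length (lower_word q) = nat Q"
    using q by (simp_all add: length_upper_word length_lower_word)
  obtain k where k: "k < nat Q" "\<And>i. upper_mech (of_rat q) (k + i) = lower_mech (of_rat q) i"
    using upper_mech_rotate_eq_lower_mech[OF assms q] by blast
  have "rotate k (upper_word q) = lower_word q"
    using len nth_rotate_upper_word[OF q] k q by (intro nth_equalityI) (auto simp: nth_lower_word)
  then have lower_in: "lower_word q \<in> ?R"
    using k len by force
  have lower_least: "lex_less (lower_word q) v" if "v \<in> ?R" "v \<noteq> lower_word q" for v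
    using that lex_less_lower_word_rotate[OF assms] by auto
  show ?thesis
    unfolding min_rot_def
  proof (rule the_equality)
    show "lower_word q \<in> ?R \<and> (\<forall>v\<in>?R. v \<noteq> lower_word q \<longrightarrow> lex_less (lower_word q) v)"
      using lower_in lower_least by blast
  next
    fix u assume u: "u \<in> ?R \<and> (\<forall>v\<in>?R. v \<noteq> u \<longrightarrow> lex_less u v)"
    show "u = lower_word q"
    proof (rule ccontr)
      assume "u \<noteq> lower_word q"
      then have "lex_less u (lower_word q)" "lex_less (lower_word q) u"
        using u lower_in lower_least by auto
      then show False
        using lex_less_asym by blast
    qed
  qed
qed

section \<open>Farey parents and Farey words\<close>

definition farey_parents :: "rat \<Rightarrow> rat \<Rightarrow> rat \<Rightarrow> bool" where
  "farey_parents g x y \<longleftrightarrow>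
     0 \<le> x \<and> x < y \<and> y \<le> 1 \<and> farey_neighbours x y \<and> farey_mediant x y = g"

lemma coprime_if_lincomb_1: "u * a + v * b = (1::int) \<Longrightarrow> coprime a b"
proof (rule coprimeI)
  fix c assume "u * a + v * b = 1" "c dvd a" "c dvd b"
  then have "c dvd 1" by (metis dvd_add dvd_mult)
  then show "is_unit c" by simp
qed

lemma quotient_of_between_0_1:
  assumes "0 < g" "g < 1" "quotient_of g = (P, Q)"
  shows "0 < P" "P < Q" "0 < Q"
proof -
  have Q: "0 < Q" using quotient_of_denom_pos[OF assms(3)] .
  have g: "g = of_int P / of_int Q" using quotient_of_div[OF assms(3)] .
  show "0 < P" "P < Q" "0 < Q"
    using assms(1,2) Q unfolding g by (simp_all add: zero_less_divide_iff divide_less_eq)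
qed

lemma farey_parents_quotients:
  assumes "farey_parents g x y" and g: "quotient_of g = (P, Q)"
  obtains a b c d where "quotient_of x = (a, b)" "quotient_of y = (c, d)" "b * c - a * d = 1"
    "a + c = P" "b + d = Q" "0 < b" "0 < d"
proof -
  obtain a b where x: "quotient_of x = (a, b)" by (cases "quotient_of x")
  obtain c d where y: "quotient_of y = (c, d)" by (cases "quotient_of y")
  have b: "0 < b" and d: "0 < d"
    using quotient_of_denom_pos[OF x] quotient_of_denom_pos[OF y] .
  have det: "b * c - a * d = 1" and mediant: "Fract (a + c) (b + d) = g"
    using assms(1) x y by (simp_all add: farey_parents_def farey_neighbours_def farey_mediant_def)
  have "coprime (a + c) (b + d)"
    using det by (intro coprime_if_lincomb_1[of "-d" _ c]) (simp add: algebra_simps)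
  then have "quotient_of g = (a + c, b + d)"
    using mediant b d by (metis normalize_stable quotient_of_Fract add_pos_pos)
  then show ?thesis
    using that x y det b d g by simp
qed

lemma right_neighbour_unique:
  assumes "coprime P Q"
    and "Q * c - P * d = (1::int)" "0 \<le> d" "d < Q"
    and "Q * c' - P * d' = 1" "0 \<le> d'" "d' < Q"
  shows "c = c' \<and> d = d'"
proof -
  have Q: "0 < Q"
    using assms(3,4) by simp
  have "Q * (c - c') = P * (d - d')"
    using assms(2,5) by (simp add: algebra_simps)
  then have "Q dvd P * (d - d')"
    by (metis dvd_triv_left)
  then have "Q dvd (d - d')"
    using assms(1) by (simp add: coprime_commute coprime_dvd_mult_right_iff)
  then obtain k where k: "d - d' = Q * k"
    by (auto simp: dvd_def)
  have "k = 0"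
  proof (rule ccontr)
    assume "k \<noteq> 0"
    then have "Q \<le> \<bar>Q * k\<bar>"
      using Q by (simp add: abs_mult)
    then show False
      using k assms(3,4,6,7) by linarith
  qed
  then have "d = d'"
    using k by simp
  moreover from this have "Q * c = Q * c'"
    using assms(2,5) by (metis diff_eq_eq)
  ultimately show ?thesis
    using Q by simp
qed

lemma farey_parents_unique:
  assumes "farey_parents g x y" "farey_parents g x' y'"
  shows "x' = x \<and> y' = y"
proof -
  obtain P Q where g: "quotient_of g = (P, Q)" by (cases "quotient_of g")
  obtain a b c d where x: "quotient_of x = (a, b)" and y: "quotient_of y = (c, d)"
    and h: "b * c - a * d = 1" "a + c = P" "b + d = Q" "0 < b" "0 < d"
    using farey_parents_quotients[OF assms(1) g] .
  obtain a' b' c' d' where x': "quotient_of x' = (a', b')" and y': "quotient_of y' = (c', d')"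
    and h': "b' * c' - a' * d' = 1" "a' + c' = P" "b' + d' = Q" "0 < b'" "0 < d'"
    using farey_parents_quotients[OF assms(2) g] .
  have "Q * c - P * d = 1"
    using h(1) unfolding h(2,3)[symmetric] by (simp add: algebra_simps)
  moreover have "Q * c' - P * d' = 1"
    using h'(1) unfolding h'(2,3)[symmetric] by (simp add: algebra_simps)
  moreover have "0 \<le> d" "d < Q" "0 \<le> d'" "d' < Q"
    using h h' by linarith+
  ultimately have "c = c' \<and> d = d'"
    by (intro right_neighbour_unique[OF quotient_of_coprime[OF g]])
  moreover from this have "a' = a" "b' = b"
    using h(2,3) h'(2,3) by auto
  ultimately show ?thesis
    using x y x' y' by (simp flip: quotient_of_inject_eq)
qed

lemma right_neighbour_exists:
  assumes "coprime P Q" "0 < P" "P < (Q::int)"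
  obtains c d where "Q * c - P * d = 1" "0 < d" "d < Q"
proof -
  obtain u v where uv: "u * P + v * Q = 1"
    using bezout_int[of P Q] assms(1) by (auto simp: coprime_iff_gcd_eq_1)
  define k d where "k = (- u) div Q" and "d = (- u) mod Q"
  define c where "c = v - P * k"
  have u: "u = - (Q * k) - d"
    unfolding k_def d_def by (metis add.inverse_inverse diff_minus_eq_add minus_add_distrib mult_div_mod_eq)
  have "Q * c - P * d = Q * v + P * (- (Q * k) - d)"
    unfolding c_def by (simp add: algebra_simps)
  also have "\<dots> = 1"
    using uv unfolding u by (simp add: algebra_simps)
  finally have e: "Q * c - P * d = 1" .
  have "d \<noteq> 0"
  proof
    assume "d = 0"
    then have "Q dvd 1"
      using e by (metis diff_zero dvd_triv_left mult_zero_right)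
    then show False
      using assms(2,3) by simp
  qed
  moreover have "0 \<le> d" "d < Q"
    unfolding d_def using assms(2,3) by auto
  ultimately show ?thesis
    using that e by simp
qed

lemma farey_parents_Fract:
  fixes a b c d :: int
  assumes det: "b * c - a * d = 1" and "0 \<le> a" "0 < b" "0 < d" "c \<le> d"
    and g: "g = Fract (a + c) (b + d)"
  shows "farey_parents g (Fract a b) (Fract c d)"
    and "quotient_of (Fract a b) = (a, b)" "quotient_of (Fract c d) = (c, d)"
proof -
  have "coprime a b" "coprime c d"
    using det by (auto intro: coprime_if_lincomb_1[of "-d" _ c] coprime_if_lincomb_1[of b _ "-a"]
        simp: algebra_simps)
  then show qx: "quotient_of (Fract a b) = (a, b)" and qy: "quotient_of (Fract c d) = (c, d)"
    using assms(3,4) by (simp_all add: quotient_of_Fract)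
  show "farey_parents g (Fract a b) (Fract c d)"
    unfolding farey_parents_def
  proof (intro conjI)
    have "(0::rat) < of_int b" "(0::rat) < of_int d"
      using assms(3,4) by simp_all
    moreover have "of_int a * of_int d < (of_int c * of_int b :: rat)"
      using det by (simp flip: of_int_mult add: algebra_simps)
    ultimately show "Fract a b < Fract c d"
      by (simp add: Fract_of_int_quotient field_simps)
    show "0 \<le> Fract a b" "Fract c d \<le> 1"
      using assms(2-5) by (simp_all add: Fract_of_int_quotient)
    show "farey_neighbours (Fract a b) (Fract c d)"
      using qx qy det by (simp add: farey_neighbours_def)
    show "farey_mediant (Fract a b) (Fract c d) = g"
      using qx qy g by (simp add: farey_mediant_def)
  qed
qed

lemma farey_parents_exist:
  assumes "0 < g" "g < 1" and g: "quotient_of g = (P, Q)"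
    and cd: "Q * c - P * d = 1" "0 < d" "d < Q"
  shows "farey_parents g (Fract (P - c) (Q - d)) (Fract c d)"
    and "quotient_of (Fract (P - c) (Q - d)) = (P - c, Q - d)" "quotient_of (Fract c d) = (c, d)"
    and "0 < c" "0 \<le> P - c"
proof -
  define a b where "a = P - c" and "b = Q - d"
  have P: "0 < P" "P < Q"
    using quotient_of_between_0_1[OF assms(1-3)] by auto
  have det: "b * c - a * d = 1" and Pb: "P * b - a * Q = 1"
    using cd unfolding a_def b_def by (simp_all add: algebra_simps)
  have b: "0 < b"
    using cd unfolding b_def by simp
  have "Q * c = 1 + P * d" "0 < P * d"
    using cd P by simp_all
  then have "0 < Q * c"
    by simp
  then show "0 < c"
    using P by (simp add: zero_less_mult_iff)
  have "Q * a = P * b - 1"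
    using Pb by (simp add: algebra_simps)
  moreover have "0 < P * b"
    using P b by simp
  ultimately have "0 \<le> Q * a"
    by linarith
  then show a: "0 \<le> P - c"
    using P unfolding a_def[symmetric] by (simp add: zero_le_mult_iff)
  have "1 \<le> (Q - P) * d"
    using P cd by (simp add: int_one_le_iff_zero_less)
  then have "Q * c \<le> Q * d"
    using cd by (simp add: algebra_simps)
  then have "c \<le> d"
    using P by simp
  moreover have "g = Fract (a + c) (b + d)"
    using quotient_of_div[OF g] unfolding a_def b_def by (simp add: Fract_of_int_quotient)
  ultimately show "farey_parents g (Fract (P - c) (Q - d)) (Fract c d)"
    and "quotient_of (Fract (P - c) (Q - d)) = (P - c, Q - d)" "quotient_of (Fract c d) = (c, d)"
    using farey_parents_Fract[OF det] a b cd unfolding a_def b_def by auto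
qed

lemma farey_parents_left_right:
  assumes "0 < g" "g < 1" and g: "quotient_of g = (P, Q)"
  obtains a b c d where "quotient_of (left_parent g) = (a, b)" "quotient_of (right_parent g) = (c, d)"
    "Q * c - P * d = 1" "a + c = P" "b + d = Q" "0 \<le> a" "0 < b" "0 < c" "0 < d"
    "0 \<le> left_parent g" "left_parent g < right_parent g" "right_parent g \<le> 1"
proof -
  have "coprime P Q" "0 < P" "P < Q"
    using quotient_of_coprime[OF g] quotient_of_between_0_1[OF assms] by auto
  then obtain c d where cd: "Q * c - P * d = 1" "0 < d" "d < Q"
    by (rule right_neighbour_exists)
  note parents = farey_parents_exist[OF assms cd]
  have "left_parent g = Fract (P - c) (Q - d)" "right_parent g = Fract c d"
    using parents(1) farey_parents_unique[OF parents(1)]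
    unfolding left_parent_def right_parent_def farey_parents_def[symmetric] by (blast intro: the_equality)+
  then show ?thesis
    using that[of "P - c" "Q - d" c d] parents cd by (simp add: farey_parents_def)
qed

lemma ceiling_divide_eq_iff:
  assumes "(0::int) < Q"
  shows "\<lceil>(of_int n / of_int Q :: real)\<rceil> = m \<longleftrightarrow> (m - 1) * Q < n \<and> n \<le> m * Q"
proof -
  have Q: "(0::real) < of_int Q" using assms by simp
  have "\<lceil>(of_int n / of_int Q :: real)\<rceil> = m \<longleftrightarrow>
        of_int m - 1 < (of_int n / of_int Q :: real) \<and> of_int n / of_int Q \<le> (of_int m :: real)"
    by (rule ceiling_eq_iff)
  also have "\<dots> \<longleftrightarrow> (of_int m - 1) * of_int Q < (of_int n :: real) \<and> of_int n \<le> of_int m * (of_int Q :: real)"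
    using Q by (simp add: pos_less_divide_eq pos_divide_le_eq)
  also have "\<dots> \<longleftrightarrow> of_int ((m - 1) * Q) < (of_int n :: real) \<and> of_int n \<le> (of_int (m * Q) :: real)"
    by simp
  also have "\<dots> \<longleftrightarrow> (m - 1) * Q < n \<and> n \<le> m * Q"
    by (simp only: of_int_less_iff of_int_le_iff)
  finally show ?thesis .
qed

text \<open>For neighbours c/d and P/Q with Q c - P d = 1 there is no fraction with denominator at
  most d strictly between them, so the multiples i P/Q and i c/d have the same ceiling for i \<le> d.\<close>

lemma ceiling_mult_right_neighbour:
  fixes P Q c d :: int
  assumes e: "Q * c - P * d = 1" and d: "0 < d" "d < Q" and i: "i \<le> nat d"
  shows "\<lceil>(of_int (int i * P) / of_int Q :: real)\<rceil> = \<lceil>(of_int (int i * c) / of_int d :: real)\<rceil>"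
proof -
  define m where "m = \<lceil>(of_int (int i * c) / of_int d :: real)\<rceil>"
  have m: "(m - 1) * d < int i * c" "int i * c \<le> m * d"
    using ceiling_divide_eq_iff[OF d(1), of "int i * c" m] unfolding m_def by simp_all
  have id: "d * (m * Q - int i * P) = Q * (m * d - int i * c) + int i * (Q * c - P * d)"
    "d * ((m - 1) * Q - int i * P) = Q * ((m - 1) * d - int i * c) + int i * (Q * c - P * d)"
    by (simp_all add: algebra_simps)
  have "0 \<le> Q * (m * d - int i * c)"
    using m d by simp
  then have "0 \<le> d * (m * Q - int i * P)"
    unfolding id e by simp
  moreover have "Q * ((m - 1) * d - int i * c) \<le> Q * (-1)"
    using m d by (intro mult_left_mono) auto
  then have "d * ((m - 1) * Q - int i * P) < 0"
    unfolding id e using i d by simp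
  ultimately have "(m - 1) * Q < int i * P" "int i * P \<le> m * Q"
    using d by (simp_all add: zero_le_mult_iff mult_less_0_iff)
  then show ?thesis
    using ceiling_divide_eq_iff[of Q "int i * P" m] d unfolding m_def by simp
qed

lemma ceiling_mult_left_neighbour:
  fixes P Q a b c d :: int
  assumes e1: "P * b - a * Q = 1" and e2: "Q * c - P * d = 1" and b: "0 < b" "b < Q" and d: "0 < d"
    and j: "j \<le> nat b"
  shows "\<lceil>(of_int (int (nat d + j) * P) / of_int Q :: real)\<rceil>
           = c + \<lceil>(of_int (int j * a) / of_int b :: real)\<rceil>"
proof -
  define m where "m = \<lceil>(of_int (int j * a) / of_int b :: real)\<rceil>"
  have m: "(m - 1) * b < int j * a" "int j * a \<le> m * b"
    using ceiling_divide_eq_iff[OF b(1), of "int j * a" m] unfolding m_def by simp_all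
  have id: "b * ((c + m) * Q - (d + int j) * P)
          = b * (Q * c - P * d) + Q * (m * b - int j * a) - int j * (P * b - a * Q)"
    "b * ((c + m - 1) * Q - (d + int j) * P)
          = b * (Q * c - P * d) + Q * ((m - 1) * b - int j * a) - int j * (P * b - a * Q)"
    by (simp_all add: algebra_simps)
  have jb: "int j \<le> b"
    using j b by (simp add: le_nat_iff)
  have "0 \<le> Q * (m * b - int j * a)"
    using m b by simp
  then have "0 \<le> b * ((c + m) * Q - (d + int j) * P)"
    unfolding id e1 e2 using jb by simp
  moreover have "Q * ((m - 1) * b - int j * a) \<le> Q * (-1)"
    using m b by (intro mult_left_mono) auto
  then have "b * ((c + m - 1) * Q - (d + int j) * P) < 0"
    unfolding id e1 e2 using jb b by simp
  ultimately have "(c + m - 1) * Q < (d + int j) * P" "(d + int j) * P \<le> (c + m) * Q"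
    using b by (simp_all add: zero_le_mult_iff mult_less_0_iff)
  moreover have "int (nat d + j) = d + int j"
    using d by simp
  ultimately show ?thesis
    using ceiling_divide_eq_iff[of Q "(d + int j) * P" "c + m"] b unfolding m_def by simp
qed

lemma upper_word_0: "upper_word 0 = [0]"
  by (simp add: upper_word_def upper_mech_def)

lemma upper_word_1: "upper_word 1 = [1]"
  by (simp add: upper_word_def upper_mech_def)

lemma upper_word_mediant:
  assumes "0 < g" "g < 1"
  shows "upper_word g = upper_word (right_parent g) @ upper_word (left_parent g)"
proof -
  obtain P Q where g: "quotient_of g = (P, Q)" by (cases "quotient_of g")
  obtain a b c d where l: "quotient_of (left_parent g) = (a, b)"
    and r: "quotient_of (right_parent g) = (c, d)"
    and e2: "Q * c - P * d = 1" and ac: "a + c = P" and bd: "b + d = Q" and b: "0 < b" and d: "0 < d"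
    by (rule farey_parents_left_right[OF assms g])
  have e1: "P * b - a * Q = 1"
    using e2 unfolding ac[symmetric] bd[symmetric] by (simp add: algebra_simps)
  have times_of_rat: "real i * of_rat x = of_int (int i * p) / of_int q" if "quotient_of x = (p, q)" for i x p q
    using of_rat_quotient[OF that] by simp
  have right: "\<lceil>real i * of_rat g\<rceil> = \<lceil>real i * of_rat (right_parent g)\<rceil>" if "i \<le> nat d" for i
    unfolding times_of_rat[OF g] times_of_rat[OF r]
    using ceiling_mult_right_neighbour[OF e2 d _ that] b bd by simp
  have left: "\<lceil>real (nat d + j) * of_rat g\<rceil> = c + \<lceil>real j * of_rat (left_parent g)\<rceil>" if "j \<le> nat b" for j
    unfolding times_of_rat[OF g] times_of_rat[OF l]
    using ceiling_mult_left_neighbour[OF e1 e2 b _ d that] d bd by simp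
  have len: "nat Q = nat d + nat b"
    using bd b d by simp
  show ?thesis
  proof (rule nth_equalityI)
    show "length (upper_word g) = length (upper_word (right_parent g) @ upper_word (left_parent g))"
      using len g l r by (simp add: upper_word_def)
  next
    fix i assume "i < length (upper_word g)"
    then have i: "i < nat d + nat b"
      using g len by (simp add: upper_word_def)
    show "upper_word g ! i = (upper_word (right_parent g) @ upper_word (left_parent g)) ! i"
    proof (cases "i < nat d")
      case True
      then show ?thesis
        using i g l r right[of i] right[of "Suc i"] len
        by (simp add: upper_word_def nth_append upper_mech_def)
    next
      case False
      define j where "j = i - nat d"
      have ij: "i = nat d + j" "j < nat b"
        using False i unfolding j_def by auto
      have "Suc i = nat d + Suc j"
        using ij by simp
      then show ?thesis
        using ij g l r left[of j] left[of "Suc j"] len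
        by (simp add: upper_word_def nth_append upper_mech_def)
    qed
  qed
qed

lemma farey_word_aux_eq_upper_word:
  "0 < n \<Longrightarrow> 0 \<le> q \<Longrightarrow> q \<le> 1 \<Longrightarrow> nat (snd (quotient_of q)) \<le> n \<Longrightarrow> farey_word_aux n q = upper_word q"
proof (induction n arbitrary: q)
  case (Suc n)
  show ?case
  proof (cases "q = 0 \<or> q = 1")
    case True
    then show ?thesis
      using upper_word_0 upper_word_1 by auto
  next
    case False
    then have q: "0 < q" "q < 1"
      using Suc.prems by auto
    obtain P Q where qQ: "quotient_of q = (P, Q)" by (cases "quotient_of q")
    obtain a b c d where l: "quotient_of (left_parent q) = (a, b)"
      and r: "quotient_of (right_parent q) = (c, d)" and "b + d = Q" "0 < b" "0 < d"
      and "0 \<le> left_parent q" "left_parent q < right_parent q" "right_parent q \<le> 1"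
      by (rule farey_parents_left_right[OF q qQ])
    moreover have "nat Q \<le> Suc n"
      using Suc.prems qQ by simp
    ultimately have "0 < n" "nat b \<le> n" "nat d \<le> n"
      by linarith+
    then have "farey_word_aux n (right_parent q) = upper_word (right_parent q)"
      "farey_word_aux n (left_parent q) = upper_word (left_parent q)"
      using Suc.IH l r \<open>0 \<le> left_parent q\<close> \<open>left_parent q < right_parent q\<close> \<open>right_parent q \<le> 1\<close>
      by simp_all
    then show ?thesis
      using False upper_word_mediant[OF q] by simp
  qed
qed simp

lemma farey_word_eq_upper_word: "0 \<le> q \<Longrightarrow> q \<le> 1 \<Longrightarrow> farey_word q = upper_word q"
  unfolding farey_word_def
  using farey_word_aux_eq_upper_word[of "nat (snd (quotient_of q))" q] quotient_of_denom_pos'[of q]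
  by simp

section \<open>Integers coprime to n in short intervals\<close>

definition sieved :: "nat set \<Rightarrow> real \<Rightarrow> real \<Rightarrow> int set" where
  "sieved S A L = {m. A \<le> of_int m \<and> of_int m < A + L \<and> (\<forall>p\<in>S. \<not> int p dvd m)}"

lemma finite_sieved: "finite (sieved S A L)"
  by (rule finite_subset[of _ "{\<lceil>A\<rceil>..<\<lceil>A + L\<rceil>}"])
     (auto simp: sieved_def ceiling_le_iff less_ceiling_iff)

lemma card_sieved_empty:
  assumes "0 \<le> L"
  shows "\<bar>real (card (sieved {} A L)) - L\<bar> \<le> 1"
proof -
  have "sieved {} A L = {\<lceil>A\<rceil>..<\<lceil>A + L\<rceil>}"
    by (auto simp: sieved_def ceiling_le_iff less_ceiling_iff)
  moreover have "\<lceil>A\<rceil> \<le> \<lceil>A + L\<rceil>"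
    using assms by (intro ceiling_mono) simp
  ultimately have "real (card (sieved {} A L)) = of_int \<lceil>A + L\<rceil> - of_int \<lceil>A\<rceil>"
    by simp
  then show ?thesis
    using ceiling_correct[of "A + L"] ceiling_correct[of A] by linarith
qed

text \<open>Removing the multiples of one more prime p: they are p times the elements of the sieved
  interval scaled down by p.\<close>

lemma card_sieved_insert:
  assumes p: "prime p" "p \<notin> S" and S: "\<forall>q\<in>S. prime q"
  shows "real (card (sieved (insert p S) A L))
           = real (card (sieved S A L)) - real (card (sieved S (A / p) (L / p)))"
proof -
  have p0: "(0::real) < real p"
    using p prime_gt_0_nat by simp
  define D where "D = {m \<in> sieved S A L. int p dvd m}"
  have DM: "D \<subseteq> sieved S A L"
    unfolding D_def by auto
  have coprime_factor: "\<not> int q dvd int p * j" if "q \<in> S" "\<not> int q dvd j" for q j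
  proof
    assume "int q dvd int p * j"
    then have "int q dvd int p"
      using that S prime_dvd_mult_iff[of "int q"] by auto
    then show False
      using that(1) S p primes_dvd_imp_eq[of q p] by auto
  qed
  have "D = (\<lambda>j. int p * j) ` sieved S (A / p) (L / p)"
  proof (intro set_eqI iffI)
    fix m assume m: "m \<in> D"
    then obtain j where "m = int p * j"
      unfolding D_def by (auto elim: dvdE)
    moreover have "A \<le> of_int m" "of_int m < A + L" "\<forall>q\<in>S. \<not> int q dvd m"
      using m unfolding D_def sieved_def by auto
    ultimately have "j \<in> sieved S (A / p) (L / p)"
      using p0 unfolding sieved_def
      by (auto simp: divide_le_eq less_divide_eq add_divide_distrib[symmetric] mult.commute dest: dvd_mult)
    then show "m \<in> (\<lambda>j. int p * j) ` sieved S (A / p) (L / p)"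
      using \<open>m = int p * j\<close> by blast
  next
    fix m assume "m \<in> (\<lambda>j. int p * j) ` sieved S (A / p) (L / p)"
    then show "m \<in> D"
      using p0 coprime_factor unfolding D_def sieved_def
      by (auto simp: divide_le_eq less_divide_eq add_divide_distrib[symmetric] mult.commute)
  qed
  then have "card D = card (sieved S (A / p) (L / p))"
    using p0 by (simp add: card_image inj_on_def)
  moreover have "sieved (insert p S) A L = sieved S A L - D"
    unfolding sieved_def D_def by auto
  then have "card (sieved (insert p S) A L) = card (sieved S A L) - card D"
    using card_Diff_subset[OF finite_subset[OF DM finite_sieved] DM] by simp
  moreover have "card D \<le> card (sieved S A L)"
    using card_mono[OF finite_sieved DM] .
  ultimately show ?thesis
    by (simp add: of_nat_diff)
qed

lemma card_sieved_approx:
  assumes "finite S" "\<forall>p\<in>S. prime p" "0 \<le> L"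
  shows "\<bar>real (card (sieved S A L)) - L * (\<Prod>p\<in>S. 1 - 1 / real p)\<bar> \<le> 2 ^ card S"
  using assms
proof (induction S arbitrary: A L rule: finite_induct)
  case empty
  then show ?case
    using card_sieved_empty by simp
next
  case (insert p S)
  have p: "prime p" and S: "\<forall>q\<in>S. prime q"
    using insert.prems by auto
  have p0: "(0::real) < real p"
    using p prime_gt_0_nat by simp
  define c where "c = (\<Prod>p\<in>S. 1 - 1 / real p)"
  have "\<bar>real (card (sieved S A L)) - L * c\<bar> \<le> 2 ^ card S"
    using insert.IH S insert.prems(2) unfolding c_def by simp
  moreover have "\<bar>real (card (sieved S (A / p) (L / p))) - (L / p) * c\<bar> \<le> 2 ^ card S"
    using insert.IH[where A = "A / p" and L = "L / p"] S insert.prems(2) p0 unfolding c_def by simp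
  moreover have "L * (\<Prod>q\<in>insert p S. 1 - 1 / real q) = L * c - (L / p) * c"
    using insert.hyps unfolding c_def by (simp add: algebra_simps)
  ultimately show ?case
    unfolding card_sieved_insert[OF p insert.hyps(2) S] using insert.hyps by simp
qed

lemma prime_power_le_totient_factor:
  assumes "prime p" "0 < e"
  shows "real (p ^ e) \<le> (if p < 16 then 16 else 1) * (real (p ^ (e - 1) * (p - 1)) / 2) ^ 2"
proof -
  define x where "x = real (p ^ e)"
  define h where "h = real (p ^ (e - 1) * (p - 1)) / 2"
  have p2: "2 \<le> p"
    using prime_ge_2_nat[OF assms(1)] .
  have "x = real p * real (p ^ (e - 1))"
    unfolding x_def using assms(2) by (simp flip: power_Suc)
  then have "x / 4 \<le> h"
    using p2 unfolding h_def by (simp add: of_nat_diff field_simps)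
  moreover have "0 \<le> x / 4"
    unfolding x_def by simp
  ultimately have "(x / 4) ^ 2 \<le> h ^ 2"
    by (rule power_mono)
  moreover have "x \<le> (if p < 16 then 16 else 1) * (x / 4) ^ 2"
  proof (cases "p < 16")
    case True
    have "1 \<le> x"
      unfolding x_def using p2 by simp
    then show ?thesis
      using True by (simp add: power2_eq_square)
  next
    case False
    have "16 \<le> p ^ e"
      using False self_le_power[of p e] p2 assms(2) by simp
    then have "16 \<le> x"
      unfolding x_def by (metis numeral_le_real_of_nat_iff)
    then show ?thesis
      using False by (simp add: power2_eq_square)
  qed
  ultimately show ?thesis
    unfolding x_def h_def by (auto intro: order_trans mult_left_mono)
qed

lemma real_le_totient_div_two_pow:
  assumes "0 < n"
  shows "real n \<le> 16 ^ 16 * (real (totient n) / 2 ^ card (prime_factors n)) ^ 2"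
proof -
  let ?F = "prime_factors n"
  let ?h = "\<lambda>p. real (p ^ (multiplicity p n - 1) * (p - 1)) / 2"
  have "real n = (\<Prod>p\<in>?F. real (p ^ multiplicity p n))"
    using prime_factorization_nat[OF assms] by (metis of_nat_prod)
  also have "\<dots> \<le> (\<Prod>p\<in>?F. (if p < 16 then 16 else 1) * ?h p ^ 2)"
    by (intro prod_mono conjI prime_power_le_totient_factor)
       (auto simp: prime_factors_multiplicity)
  also have "\<dots> = 16 ^ card {p \<in> ?F. p < 16} * (\<Prod>p\<in>?F. ?h p) ^ 2"
    by (simp add: prod.distrib prod_power_distrib prod.inter_filter[symmetric])
  also have "16 ^ card {p \<in> ?F. p < 16} \<le> (16 ^ 16 :: real)"
    using card_mono[of "{..<16}" "{p \<in> ?F. p < 16}"] by (intro power_increasing) auto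
  also have "(\<Prod>p\<in>?F. ?h p) = real (totient n) / 2 ^ card ?F"
    using totient_formula1[OF assms] by (simp add: prod_dividef)
  finally show ?thesis
    by (simp add: mult_right_mono)
qed

lemma eventually_two_pow_card_prime_factors_less:
  assumes "0 < \<delta>"
  shows "\<exists>n0. \<forall>n\<ge>n0. 2 ^ card (prime_factors n) < \<delta> * real (totient n)"
proof (intro exI allI impI)
  fix n assume n: "nat \<lceil>16 ^ 16 / \<delta>\<^sup>2\<rceil> + 1 \<le> n"
  define G where "G = real (totient n) / 2 ^ card (prime_factors n)"
  have "16 ^ 16 / \<delta>\<^sup>2 < real n"
    using n by linarith
  also have "real n \<le> 16 ^ 16 * G\<^sup>2"
    unfolding G_def using n by (intro real_le_totient_div_two_pow) simp
  finally have "1 < (\<delta> * G)\<^sup>2"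
    using assms by (simp add: field_simps power_mult_distrib)
  moreover have "0 \<le> \<delta> * G"
    unfolding G_def using assms by simp
  ultimately have "1 < \<delta> * G"
    by (smt (verit) one_less_power power2_eq_square power_le_one)
  then show "2 ^ card (prime_factors n) < \<delta> * real (totient n)"
    unfolding G_def by (simp add: field_simps)
qed

lemma eventually_coprime_in_interval:
  assumes "0 < \<delta>"
  obtains n0 where "\<And>n A. n0 \<le> n \<Longrightarrow> 0 \<le> A \<Longrightarrow>
    \<exists>m. A \<le> real m \<and> real m < A + \<delta> * real n \<and> coprime m n"
proof -
  obtain n0 where n0: "\<And>n. n0 \<le> n \<Longrightarrow> 2 ^ card (prime_factors n) < \<delta> * real (totient n)"
    using eventually_two_pow_card_prime_factors_less[OF assms] by blast
  have "\<exists>m. A \<le> real m \<and> real m < A + \<delta> * real n \<and> coprime m n"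
    if n: "max n0 1 \<le> n" and A: "0 \<le> A" for n A
  proof -
    let ?S = "sieved (prime_factors n) A (\<delta> * real n)"
    have "\<forall>p\<in>prime_factors n. prime p"
      by (auto intro: in_prime_factors_imp_prime)
    then have "\<bar>real (card ?S) - \<delta> * real (totient n)\<bar> \<le> 2 ^ card (prime_factors n)"
      using card_sieved_approx[of "prime_factors n" "\<delta> * real n" A] assms
      by (simp add: totient_formula2 mult.assoc)
    then have "card ?S \<noteq> 0"
      using n0[of n] n by linarith
    then obtain m where m: "m \<in> ?S"
      by (metis card.empty ex_in_conv)
    then have m_in: "A \<le> of_int m" "of_int m < A + \<delta> * real n"
      and m_sieved: "\<And>p. p \<in> prime_factors n \<Longrightarrow> \<not> int p dvd m"
      unfolding sieved_def by auto
    have "0 \<le> m"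
      using m_in A by linarith
    have "coprime (nat m) n"
    proof (rule ccontr)
      assume "\<not> coprime (nat m) n"
      then obtain p where p: "prime p" "p dvd nat m" "p dvd n"
        using n prime_factor_nat[of "gcd (nat m) n"] by (auto simp: coprime_iff_gcd_eq_1)
      then have "int p dvd int (nat m)"
        by (simp only: int_dvd_int_iff)
      then show False
        using m_sieved[of p] p \<open>0 \<le> m\<close> n by (simp add: in_prime_factors_iff)
    qed
    then show ?thesis
      using m_in \<open>0 \<le> m\<close> by (intro exI[of _ "nat m"]) simp
  qed
  then show ?thesis
    using that[of "max n0 1"] by blast
qed

lemma div_mult_not_additive:
  fixes m n t :: nat
  assumes "coprime m n" "0 < t" "t < n"
  obtains i where "(t + i) * m div n \<noteq> t * m div n + i * m div n"
proof -
  define r where "r = t * m mod n"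
  have n: "0 < n"
    using assms by simp
  have "m \<noteq> 0"
  proof
    assume "m = 0"
    then have "n = 1"
      using assms(1) by simp
    then show False
      using assms(2,3) by simp
  qed
  have r: "0 < r" "r < n"
  proof -
    have "\<not> n dvd t"
      using assms(2,3) by (auto dest: dvd_imp_le)
    then have "\<not> n dvd t * m"
      using assms(1) by (simp add: coprime_commute coprime_dvd_mult_left_iff)
    then show "0 < r" "r < n"
      unfolding r_def using n by (simp_all add: dvd_eq_mod_eq_0)
  qed
  obtain x y where "m * x = n * y + 1"
    using bezout_nat[OF \<open>m \<noteq> 0\<close>, of n] assms(1) by auto
  text \<open>With i m \<equiv> n - r (mod n) the remainders of t m and i m add up to n, producing a carry.\<close>
  define i where "i = x * (n - r)"
  have "i * m = (n - r) * (m * x)"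
    unfolding i_def by (simp add: algebra_simps)
  also have "\<dots> = (n - r) * (n * y + 1)"
    using \<open>m * x = n * y + 1\<close> by simp
  finally have im: "i * m = (n - r) + n * ((n - r) * y)"
    by (simp add: algebra_simps)
  define q where "q = t * m div n"
  have "(t + i) * m = t * m + i * m"
    by (simp add: algebra_simps)
  also have "\<dots> = n * q + (r + (n - r)) + n * ((n - r) * y)"
    unfolding im q_def r_def by simp
  also have "\<dots> = n * (q + 1 + (n - r) * y)"
    using r by (simp add: algebra_simps)
  finally have "(t + i) * m = n * (t * m div n + 1 + (n - r) * y)"
    unfolding q_def .
  then have "(t + i) * m div n = t * m div n + 1 + (n - r) * y"
    using n by simp
  moreover have "n - r < n"
    using r by simp
  then have "i * m div n = (n - r) * y"
    unfolding im by simp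
  ultimately show ?thesis
    using that[of i] by simp
qed

lemma periodic_pt_lower_mech:
  fixes m n :: nat
  assumes "1 < \<beta>" and n: "0 < n" "coprime m n" "m \<le> n"
    and tails: "\<And>k. seqval \<beta> (shift k (lower_mech (real m / real n))) < 1"
  shows "periodic_pt \<beta> n (seqval \<beta> (lower_mech (real m / real n)))"
proof -
  define \<alpha> where "\<alpha> = real m / real n"
  define s where "s = lower_mech \<alpha>"
  have \<alpha>: "0 \<le> \<alpha>" "\<alpha> \<le> 1"
    unfolding \<alpha>_def using n by auto
  have s: "binary s"
    unfolding s_def using binary_lower_mech[OF \<alpha>] .
  have greedy: "(Tb \<beta> ^^ k) (seqval \<beta> s) = seqval \<beta> (shift k s)" for k
    using seqval_greedy[OF assms(1) s] tails unfolding s_def \<alpha>_def by blast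
  have floor_mult: "\<lfloor>real j * \<alpha>\<rfloor> = int (j * m div n)" for j
    unfolding \<alpha>_def using floor_divide_of_nat_eq[of "j * m" n] by (simp add: of_nat_mult)
  have period: "(j + n) * m div n = j * m div n + m" for j
  proof -
    have "(j + n) * m = j * m + m * n"
      by (simp add: algebra_simps)
    then show ?thesis
      using n(1) by simp
  qed
  have "s (i + n) = s i" for i
    using period[of i] period[of "Suc i"] unfolding s_def lower_mech_def floor_mult by simp
  then have "shift n s = s"
    by (auto simp: shift_def)
  moreover have "(Tb \<beta> ^^ t) (seqval \<beta> s) \<noteq> seqval \<beta> s" if t: "0 < t" "t < n" for t
  proof
    assume "(Tb \<beta> ^^ t) (seqval \<beta> s) = seqval \<beta> s"
    then have "seqval \<beta> (shift t s) = seqval \<beta> s"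
      using greedy by simp
    then have "gdig \<beta> (seqval \<beta> (shift t s)) k = gdig \<beta> (seqval \<beta> s) k" for k
      by simp
    then have "shift t s k = s k" for k
      using seqval_greedy[OF assms(1) binary_shift[OF s]] seqval_greedy[OF assms(1) s] tails
      unfolding s_def \<alpha>_def by (metis shift_shift)
    then have "psum (shift t s) i = psum s i" for i
      by (simp add: psum_def)
    then have "(t + i) * m div n = t * m div n + i * m div n" for i
      using psum_shift_lower_mech[OF \<alpha>(1), of t i] psum_lower_mech[OF \<alpha>(1), of i]
      unfolding s_def floor_mult by simp
    then show False
      using div_mult_not_additive[OF n(2) t] by metis
  qed
  ultimately show ?thesis
    unfolding periodic_pt_def s_def[symmetric] \<alpha>_def[symmetric]
    using greedy[of n] seqval_nonneg[OF assms(1) s] tails[of 0] n(1)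
    by (simp add: s_def \<alpha>_def)
qed

lemma min_rot_farey_word: "0 \<le> q \<Longrightarrow> q \<le> 1 \<Longrightarrow> min_rot (farey_word q) = lower_word q"
  by (simp add: farey_word_eq_upper_word min_rot_upper_word)

lemma pre_per_seq_lower_word:
  assumes "quotient_of l = (a, b)" "quotient_of g = (P, Q)"
  shows "pre_per_seq (lower_word l) (lower_word g) i =
           (if i < nat b then lower_mech (of_rat l) i else lower_mech (of_rat g) (i - nat b))"
  using assms lower_mech_mod[OF assms(2)] quotient_of_denom_pos[OF assms(2)]
  by (simp add: pre_per_seq_def length_lower_word nth_lower_word)

lemma psum_pre_per_seq_lower_word:
  assumes "0 \<le> l" "0 \<le> g" and l: "quotient_of l = (a, b)" and g: "quotient_of g = (P, Q)"
  shows "j \<le> nat b \<Longrightarrow> psum (pre_per_seq (lower_word l) (lower_word g)) j = of_int \<lfloor>real j * of_rat l\<rfloor>"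
    and "psum (pre_per_seq (lower_word l) (lower_word g)) (nat b + n) = of_int a + of_int \<lfloor>real n * of_rat g\<rfloor>"
proof -
  let ?s = "pre_per_seq (lower_word l) (lower_word g)"
  show prefix: "psum ?s j = of_int \<lfloor>real j * of_rat l\<rfloor>" if "j \<le> nat b" for j
  proof -
    have "psum ?s j = psum (lower_mech (of_rat l)) j"
      using that unfolding psum_def pre_per_seq_lower_word[OF l g] by (intro sum.cong) auto
    then show ?thesis
      using assms(1) by (simp add: psum_lower_mech)
  qed
  have "real (nat b) * of_rat l = of_int a"
    using denominator_times_of_rat[OF l] by simp
  then have "psum ?s (nat b) = of_int a"
    using prefix[of "nat b"] by simp
  moreover have "psum (shift (nat b) ?s) n = psum (lower_mech (of_rat g)) n"
    unfolding psum_def shift_def pre_per_seq_lower_word[OF l g] by simp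
  ultimately show "psum ?s (nat b + n) = of_int a + of_int \<lfloor>real n * of_rat g\<rfloor>"
    using assms(2) by (simp add: psum_add psum_lower_mech)
qed

lemma floor_mult_left_neighbour_le:
  fixes P Q a b :: int
  assumes det: "P * b - a * Q = 1" and b: "0 < b" and Q: "0 < Q" and j: "1 \<le> j"
  shows "of_int \<lfloor>real j * (of_int a / of_int b)\<rfloor> \<le> real j * (of_int P / of_int Q) - 1 / of_int Q"
proof -
  define m where "m = (int j * a) div b"
  have m_floor: "m = \<lfloor>real j * (of_int a / of_int b)\<rfloor>"
    unfolding m_def using floor_divide_of_int_eq[of "int j * a" b, where 'a=real] by simp
  have "0 \<le> int j * a - m * b"
    unfolding m_def using b by (simp add: minus_div_mult_eq_mod)
  then have "0 \<le> Q * (int j * a - m * b)"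
    using Q by simp
  moreover have "b * (int j * P - m * Q) = Q * (int j * a - m * b) + int j * (P * b - a * Q)"
    by (simp add: algebra_simps)
  ultimately have "0 < b * (int j * P - m * Q)"
    using det j by simp
  then have "m * Q \<le> int j * P - 1"
    using b by (simp add: zero_less_mult_iff)
  then have "of_int m * of_int Q \<le> (of_int (int j * P - 1) :: real)"
    by (simp only: of_int_mult[symmetric] of_int_le_iff)
  then have "of_int m \<le> (of_int (int j * P - 1) / of_int Q :: real)"
    using Q by (simp add: pos_le_divide_eq)
  then show ?thesis
    using Q m_floor by (simp add: field_simps)
qed

lemma min_rot_left_parent_words:
  assumes "0 < g" "g < 1"
  shows "pre_per_seq (min_rot (farey_word (left_parent g))) (min_rot (farey_word g))
           = pre_per_seq (lower_word (left_parent g)) (lower_word g)"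
proof -
  obtain P Q where g: "quotient_of g = (P, Q)" by (cases "quotient_of g")
  obtain a b c d where "0 \<le> left_parent g" "left_parent g < right_parent g" "right_parent g \<le> 1"
    by (rule farey_parents_left_right[OF assms g])
  then show ?thesis
    using assms by (simp add: min_rot_farey_word)
qed

lemma binary_left_parent_words:
  assumes "0 < g" "g < 1"
  shows "binary (pre_per_seq (lower_word (left_parent g)) (lower_word g))"
proof -
  obtain P Q where g: "quotient_of g = (P, Q)" by (cases "quotient_of g")
  obtain a b c d where l: "quotient_of (left_parent g) = (a, b)"
    and "0 \<le> left_parent g" "left_parent g < right_parent g" "right_parent g \<le> 1"
    by (rule farey_parents_left_right[OF assms g])
  then have "binary (lower_mech (of_rat (left_parent g)))" "binary (lower_mech (of_rat g))"
    using assms by (simp_all add: binary_lower_mech)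
  then show ?thesis
    by (simp add: binary_def pre_per_seq_lower_word[OF l g])
qed

lemma psum_left_parent_words_le:
  assumes "0 < g" "g < 1" and g: "quotient_of g = (P, Q)" and "1 \<le> j"
  shows "psum (pre_per_seq (lower_word (left_parent g)) (lower_word g)) j \<le> real j * of_rat g - 1 / of_int Q"
proof -
  obtain a b c d where l: "quotient_of (left_parent g) = (a, b)"
    and "Q * c - P * d = 1" and ac: "a + c = P" and bd: "b + d = Q" and b: "0 < b" and "0 < d"
    and l0: "0 \<le> left_parent g"
    by (rule farey_parents_left_right[OF assms(1,2) g])
  then have det: "P * b - a * Q = 1" and Q: "0 < Q"
    unfolding ac[symmetric] bd[symmetric] by (simp_all add: algebra_simps)
  show ?thesis
  proof (cases "j \<le> nat b")
    case True
    then show ?thesis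
      using psum_pre_per_seq_lower_word(1)[OF l0 _ l g] floor_mult_left_neighbour_le[OF det b Q assms(4)]
        assms(1) of_rat_quotient[OF l] of_rat_quotient[OF g] by simp
  next
    case False
    define n where "n = j - nat b"
    have "of_int P * of_int b - of_int a * of_int Q = (1::real)"
      using det by (metis of_int_1 of_int_diff of_int_mult)
    then have "of_int a = real (nat b) * of_rat g - 1 / (of_int Q :: real)"
      using Q b unfolding of_rat_quotient[OF g] by (simp add: field_simps)
    moreover have "real (nat b + n) * of_rat g = real (nat b) * of_rat g + real n * of_rat g"
      by (simp add: algebra_simps)
    ultimately have "of_int a + of_int \<lfloor>real n * of_rat g\<rfloor> \<le> real (nat b + n) * of_rat g - 1 / (of_int Q :: real)"
      using of_int_floor_le[of "real n * of_rat g"] by linarith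
    moreover have "j = nat b + n"
      using False unfolding n_def by simp
    ultimately show ?thesis
      using psum_pre_per_seq_lower_word(2)[OF l0 _ l g, of n] assms(1) by simp
  qed
qed

lemma psum_left_parent_words_le_slope:
  assumes "0 < g" "g < 1" and g: "quotient_of g = (P, Q)"
    and "of_rat g - 1 / (real N * of_int Q) \<le> \<alpha>" "1 \<le> j" "j \<le> N"
  shows "psum (pre_per_seq (lower_word (left_parent g)) (lower_word g)) j \<le> real j * \<alpha>"
proof -
  have N: "0 < real N" and Q: "0 < Q"
    using assms(5,6) quotient_of_denom_pos[OF g] by simp_all
  have "real j * (of_rat g - \<alpha>) \<le> real N * (1 / (real N * of_int Q))"
  proof (cases "\<alpha> \<le> of_rat g")
    case True
    then show ?thesis
      using assms(4-6) by (intro mult_mono) auto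
  next
    case False
    then have "real j * (of_rat g - \<alpha>) \<le> 0"
      by (simp add: mult_nonneg_nonpos)
    moreover have "0 \<le> real N * (1 / (real N * of_int Q))"
      using N Q by simp
    ultimately show ?thesis
      by linarith
  qed
  also have "\<dots> = 1 / of_int Q"
    using N by simp
  finally show ?thesis
    using psum_left_parent_words_le[OF assms(1-3,5)] by (simp add: algebra_simps)
qed

section \<open>Orbits of lower mechanical words near \<gamma>(\<beta>)\<close>

lemma exists_admissible_upper_word_above:
  fixes \<alpha> \<beta> :: real and g :: rat
  assumes "1 < \<beta>" "gamma_beta \<beta> = of_rat g" "\<alpha> < of_rat g"
  obtains q where "\<alpha> < of_rat q" "0 \<le> q" "admissible \<beta> (per_seq (upper_word q))"
proof -
  define S where "S = {real_of_rat q | q. 0 \<le> q \<and> q \<le> 1 \<and> admissible \<beta> (per_seq (farey_word q))}"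
  have "per_seq (farey_word 0) = (\<lambda>i. 0)"
    by (auto simp: per_seq_def farey_word_eq_upper_word upper_word_0)
  moreover have "admissible \<beta> (\<lambda>i. 0)"
    using assms(1) by (intro admissible_seqval) (auto simp: binary_def shift_def seqval_def)
  ultimately have "0 \<in> S"
    unfolding S_def by force
  moreover have "bdd_above S"
    unfolding S_def by (rule bdd_aboveI[of _ 1]) (auto simp: of_rat_less_eq)
  moreover have "\<alpha> < Sup S"
    using assms(2,3) unfolding gamma_beta_def S_def by simp
  ultimately obtain y where "y \<in> S" "\<alpha> < y"
    using less_cSup_iff[of S] by blast
  then show ?thesis
    using that unfolding S_def by (auto simp: farey_word_eq_upper_word)
qed

lemma seqval_shift_lower_mech_less_1:
  assumes "1 < \<beta>" "\<beta> < 2" "0 \<le> \<alpha>" "\<alpha> \<le> 1" "\<alpha> \<le> of_rat q" "0 \<le> q"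
    and "admissible \<beta> (per_seq (upper_word q))"
  shows "seqval \<beta> (shift k (lower_mech \<alpha>)) < 1"
proof -
  let ?t = "per_seq (upper_word q)"
  have t: "binary ?t" "seqval \<beta> ?t < 1"
    using admissible_imp_seqval_less_1[OF assms(1,2,7)] by auto
  have "psum (shift k (lower_mech \<alpha>)) n \<le> psum ?t n" for n
  proof -
    have "psum (shift k (lower_mech \<alpha>)) n = of_int (\<lfloor>real n * \<alpha> + real k * \<alpha>\<rfloor> - \<lfloor>real k * \<alpha>\<rfloor>)"
      using psum_shift_lower_mech[OF assms(3)] by (simp add: algebra_simps)
    also have "\<dots> \<le> of_int \<lceil>real n * \<alpha>\<rceil>"
      by (simp only: of_int_le_iff floor_add_diff_le_ceiling)
    also have "\<dots> \<le> of_int \<lceil>real n * of_rat q\<rceil>"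
      using assms(5) by (simp add: ceiling_mono mult_left_mono)
    also have "\<dots> = psum ?t n"
      using psum_per_seq_upper_word[OF assms(6)] by simp
    finally show ?thesis .
  qed
  then have "seqval \<beta> (shift k (lower_mech \<alpha>)) \<le> seqval \<beta> ?t"
    using assms(1,3,4) t(1) by (intro seqval_mono_psum binary_shift binary_lower_mech)
  then show ?thesis
    using t(2) by simp
qed

lemma seqval_truncate_ge:
  assumes "1 < \<beta>" "binary s"
  shows "seqval \<beta> s - 1 / ((\<beta> - 1) * \<beta> ^ N) \<le> seqval \<beta> (\<lambda>i. if i < N then s i else 0)"
proof -
  let ?t = "\<lambda>i. if i < N then s i else 0"
  have t: "binary ?t"
    using assms(2) by (simp add: binary_def)
  have "shift N ?t = (\<lambda>i. 0)"
    by (auto simp: shift_def)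
  then have "seqval \<beta> ?t = (\<Sum>i<N. real (s i) / \<beta> ^ Suc i)"
    using seqval_split[OF assms(1) t, of N] by (simp add: seqval_def)
  moreover have "seqval \<beta> (shift N s) / \<beta> ^ N \<le> 1 / (\<beta> - 1) / \<beta> ^ N"
    using seqval_le[OF assms(1) binary_shift[OF assms(2)]] assms(1) by (intro divide_right_mono) auto
  ultimately show ?thesis
    using seqval_split[OF assms, of N] by simp
qed

lemma seqval_shift_lower_mech_ge:
  assumes "1 < \<beta>" "binary s" "0 \<le> \<alpha>" "\<alpha> \<le> 1"
    and below: "\<And>j. 1 \<le> j \<Longrightarrow> j \<le> N \<Longrightarrow> psum s j \<le> real j * \<alpha>"
  shows "seqval \<beta> s - 1 / ((\<beta> - 1) * \<beta> ^ N) \<le> seqval \<beta> (shift k (lower_mech \<alpha>))"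
proof -
  define t where "t = (\<lambda>i. if i < N then s i else 0)"
  have t: "binary t"
    using assms(2) by (simp add: binary_def t_def)
  have psum_t: "psum t n = psum s (min n N)" for n
  proof (induction n)
    case (Suc n)
    then show ?case
      by (cases "n < N") (simp_all add: psum_Suc t_def min_def)
  qed simp
  have "psum t n \<le> psum (shift k (lower_mech \<alpha>)) n" for n
  proof (cases "min n N = 0")
    case True
    then have "psum t n = 0"
      by (simp add: psum_t)
    then show ?thesis
      by (simp add: psum_def sum_nonneg)
  next
    case False
    define j where "j = min n N"
    have "psum s j \<le> real j * \<alpha>"
      using below False unfolding j_def by simp
    then have "int (\<Sum>i<j. s i) \<le> \<lfloor>real j * \<alpha>\<rfloor>"
      by (simp add: psum_def le_floor_iff)
    also have "\<lfloor>real j * \<alpha>\<rfloor> \<le> \<lfloor>real n * \<alpha>\<rfloor>"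
      using assms(3) unfolding j_def by (intro floor_mono mult_right_mono) auto
    also have "\<lfloor>real n * \<alpha>\<rfloor> \<le> \<lfloor>real n * \<alpha> + real k * \<alpha>\<rfloor> - \<lfloor>real k * \<alpha>\<rfloor>"
      using le_floor_add[of "real n * \<alpha>" "real k * \<alpha>"] by simp
    finally have "of_int (int (\<Sum>i<j. s i))
        \<le> (of_int (\<lfloor>real n * \<alpha> + real k * \<alpha>\<rfloor> - \<lfloor>real k * \<alpha>\<rfloor>) :: real)"
      by (simp only: of_int_le_iff)
    then show ?thesis
      unfolding psum_t j_def[symmetric] psum_shift_lower_mech[OF assms(3)]
      by (simp add: psum_def algebra_simps)
  qed
  then have "seqval \<beta> t \<le> seqval \<beta> (shift k (lower_mech \<alpha>))"
    using assms(1,3,4) t by (intro seqval_mono_psum binary_shift binary_lower_mech)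
  moreover have "seqval \<beta> s - 1 / ((\<beta> - 1) * \<beta> ^ N) \<le> seqval \<beta> t"
    unfolding t_def by (rule seqval_truncate_ge[OF assms(1,2)])
  ultimately show ?thesis
    by linarith
qed

lemma exists_geometric_tail_less:
  fixes \<beta> \<epsilon> :: real
  assumes "1 < \<beta>" "0 < \<epsilon>"
  obtains N :: nat where "0 < N" "1 / ((\<beta> - 1) * \<beta> ^ N) < \<epsilon>"
proof -
  obtain N0 where "1 / ((\<beta> - 1) * \<epsilon>) < \<beta> ^ N0"
    using real_arch_pow[OF assms(1)] by blast
  moreover have "\<beta> ^ N0 \<le> \<beta> ^ Suc N0"
    using assms(1) by (intro power_increasing) auto
  ultimately have "1 / ((\<beta> - 1) * \<epsilon>) < \<beta> ^ Suc N0"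
    by linarith
  then have "1 < (\<beta> - 1) * \<epsilon> * \<beta> ^ Suc N0"
    using assms by (simp add: field_simps)
  then have "1 / ((\<beta> - 1) * \<beta> ^ Suc N0) < \<epsilon>"
    using assms by (simp add: field_simps)
  then show ?thesis
    using that[of "Suc N0"] by simp
qed

lemma lower_mech_tails_above:
  fixes \<beta> b :: real and g :: rat
  assumes \<beta>: "1 < \<beta>" "\<beta> < 2" and gamma: "gamma_beta \<beta> = of_rat g" and g: "0 < g" "g < 1"
    and b: "b < seqval \<beta> (pre_per_seq (min_rot (farey_word (left_parent g))) (min_rot (farey_word g)))"
  obtains \<alpha>0 where "0 \<le> \<alpha>0" "\<alpha>0 < of_rat g"
    "\<And>\<alpha> k. \<alpha>0 \<le> \<alpha> \<Longrightarrow> \<alpha> < of_rat g \<Longrightarrow>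
       b < seqval \<beta> (shift k (lower_mech \<alpha>)) \<and> seqval \<beta> (shift k (lower_mech \<alpha>)) < 1"
proof -
  define s where "s = pre_per_seq (lower_word (left_parent g)) (lower_word g)"
  obtain P Q where gQ: "quotient_of g = (P, Q)" by (cases "quotient_of g")
  have P: "1 \<le> P" and Q: "0 < Q"
    using quotient_of_between_0_1[OF g gQ] by auto
  have s: "binary s"
    unfolding s_def using binary_left_parent_words[OF g] .
  obtain N where N: "0 < N" and gap: "1 / ((\<beta> - 1) * \<beta> ^ N) < seqval \<beta> s - b"
    using exists_geometric_tail_less[OF \<beta>(1), of "seqval \<beta> s - b"] b
    unfolding s_def min_rot_left_parent_words[OF g] by auto
  define \<alpha>0 where "\<alpha>0 = of_rat g - 1 / (real N * of_int Q)"
  have "of_int Q \<le> real N * of_int Q"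
    using Q N mult_right_mono[of 1 "real N" "of_int Q"] by simp
  then have "1 / (real N * of_int Q) \<le> 1 / of_int Q"
    using Q by (intro divide_left_mono) auto
  moreover have "1 / of_int Q \<le> (of_rat g :: real)"
    using Q P unfolding of_rat_quotient[OF gQ] by (simp add: field_simps)
  ultimately have "0 \<le> \<alpha>0" "\<alpha>0 < of_rat g"
    using Q N unfolding \<alpha>0_def by simp_all
  moreover have "b < seqval \<beta> (shift k (lower_mech \<alpha>)) \<and> seqval \<beta> (shift k (lower_mech \<alpha>)) < 1"
    if \<alpha>: "\<alpha>0 \<le> \<alpha>" "\<alpha> < of_rat g" for \<alpha> k
  proof
    have "of_rat g < (1::real)"
      using g(2) of_rat_less[of g 1] by simp
    then have \<alpha>01: "0 \<le> \<alpha>" "\<alpha> \<le> 1"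
      using \<alpha> \<open>0 \<le> \<alpha>0\<close> by linarith+
    have "psum s j \<le> real j * \<alpha>" if "1 \<le> j" "j \<le> N" for j
      using psum_left_parent_words_le_slope[OF g gQ _ that] \<alpha>(1) unfolding s_def \<alpha>0_def by simp
    then have "seqval \<beta> s - 1 / ((\<beta> - 1) * \<beta> ^ N) \<le> seqval \<beta> (shift k (lower_mech \<alpha>))"
      by (rule seqval_shift_lower_mech_ge[OF \<beta>(1) s \<alpha>01])
    then show "b < seqval \<beta> (shift k (lower_mech \<alpha>))"
      using gap by linarith
    obtain q where q: "\<alpha> < of_rat q" "0 \<le> q" "admissible \<beta> (per_seq (upper_word q))"
      using exists_admissible_upper_word_above[OF \<beta>(1) gamma \<alpha>(2)] .
    show "seqval \<beta> (shift k (lower_mech \<alpha>)) < 1"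
      using q(1) by (intro seqval_shift_lower_mech_less_1[OF \<beta> \<alpha>01 _ q(2,3)]) simp
  qed
  ultimately show ?thesis
    by (rule that)
qed

lemma orbit_seqval_above:
  assumes "1 < \<beta>" "binary s" and tails: "\<And>k. b < seqval \<beta> (shift k s) \<and> seqval \<beta> (shift k s) < 1"
  shows "y \<in> orbit \<beta> (seqval \<beta> s) \<Longrightarrow> b < y"
  using seqval_greedy[OF assms(1,2)] tails unfolding orbit_def by auto

lemma seqval_mem_J_set:
  assumes "1 < \<beta>" "binary s" "0 \<le> b" and tails: "\<And>k. b < seqval \<beta> (shift k s) \<and> seqval \<beta> (shift k s) < 1"
  shows "seqval \<beta> s \<in> J_set \<beta> a b"
proof -
  have "b < (Tb \<beta> ^^ n) (seqval \<beta> s)" for n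
    using orbit_seqval_above[OF assms(1,2) tails] by (auto simp: orbit_def)
  then have "(Tb \<beta> ^^ n) (seqval \<beta> s) \<notin> {a<..<b}" for n
    by (meson greaterThanLessThan_iff less_asym)
  moreover have "b < seqval \<beta> s" "seqval \<beta> s < 1"
    using tails[of 0] by simp_all
  ultimately show ?thesis
    using assms(3) unfolding J_set_def by auto
qed

lemma uncountable_J_set:
  assumes "1 < \<beta>" "0 \<le> b" "0 \<le> \<alpha>0" "\<alpha>0 < \<alpha>1" "\<alpha>1 \<le> 1"
    and tails: "\<And>\<alpha> k. \<alpha>0 \<le> \<alpha> \<Longrightarrow> \<alpha> < \<alpha>1 \<Longrightarrow>
      b < seqval \<beta> (shift k (lower_mech \<alpha>)) \<and> seqval \<beta> (shift k (lower_mech \<alpha>)) < 1"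
  shows "uncountable (J_set \<beta> a b)"
proof
  define f where "f \<alpha> = seqval \<beta> (lower_mech \<alpha>)" for \<alpha>
  have "f ` {\<alpha>0..<\<alpha>1} \<subseteq> J_set \<beta> a b"
    unfolding f_def using assms(1-5) tails
    by (auto intro!: seqval_mem_J_set binary_lower_mech)
  moreover have "inj_on f {\<alpha>0..<\<alpha>1}"
    unfolding f_def using assms(1,3,5)
    by (intro strict_mono_on_imp_inj_on) (auto simp: strict_mono_on_def intro!: lower_mech_strict_mono)
  moreover assume "countable (J_set \<beta> a b)"
  ultimately have "countable {\<alpha>0..<\<alpha>1}"
    using countable_subset countable_image_inj_on by blast
  then show False
    using uncountable_half_open_interval_1 assms(4) by blast
qed

lemma finite_B_set:
  assumes "1 < \<beta>" "0 \<le> \<alpha>0" "\<alpha>0 < \<alpha>1" "\<alpha>1 \<le> 1"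
    and tails: "\<And>\<alpha> k. \<alpha>0 \<le> \<alpha> \<Longrightarrow> \<alpha> < \<alpha>1 \<Longrightarrow>
      b < seqval \<beta> (shift k (lower_mech \<alpha>)) \<and> seqval \<beta> (shift k (lower_mech \<alpha>)) < 1"
  shows "finite (B_set \<beta> a b)"
proof -
  obtain n0 where n0: "\<And>n A. n0 \<le> n \<Longrightarrow> 0 \<le> A \<Longrightarrow>
      \<exists>m. A \<le> real m \<and> real m < A + (\<alpha>1 - \<alpha>0) * real n \<and> coprime m n"
    using eventually_coprime_in_interval[of "\<alpha>1 - \<alpha>0"] assms(3) by auto
  text \<open>For large n, a slope m/n in [\<alpha>0, \<alpha>1) in lowest terms gives a periodic orbit of least period
    n above b.\<close>
  have not_bad: "\<not> bad \<beta> a b n" if n: "max n0 1 \<le> n" for n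
  proof -
    obtain m where m: "real n * \<alpha>0 \<le> real m" "real m < real n * \<alpha>0 + (\<alpha>1 - \<alpha>0) * real n"
      "coprime m n"
      using n0[of n "real n * \<alpha>0"] n assms(2) by auto
    have "0 < real n"
      using n by simp
    then have \<alpha>: "\<alpha>0 \<le> real m / real n" "real m / real n < \<alpha>1"
      using m(1,2) by (simp_all add: field_simps)
    have "real m < \<alpha>1 * real n"
      using \<alpha>(2) \<open>0 < real n\<close> by (simp add: divide_less_eq)
    moreover have "\<alpha>1 * real n \<le> real n"
      using assms(4) mult_right_mono[of \<alpha>1 1 "real n"] by simp
    ultimately have "m \<le> n"
      by linarith
    note tails_mn = tails[OF \<alpha>]
    have "periodic_pt \<beta> n (seqval \<beta> (lower_mech (real m / real n)))"
      using periodic_pt_lower_mech[OF assms(1) _ m(3) \<open>m \<le> n\<close>] tails_mn n by simp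
    moreover have "orbit \<beta> (seqval \<beta> (lower_mech (real m / real n))) \<inter> {a<..<b} = {}"
      using orbit_seqval_above[OF assms(1) _ tails_mn] binary_lower_mech \<alpha> assms(2,4)
      by fastforce
    ultimately show ?thesis
      unfolding bad_def by blast
  qed
  have "B_set \<beta> a b \<subseteq> {..<max n0 1}"
    unfolding B_set_def using not_bad leI by blast
  then show ?thesis
    using finite_subset by blast
qed

theorem mainTheorem4:
  fixes \<beta> a b :: real and g :: rat
  assumes "1 < \<beta>" and "\<beta> < 2"
    and "gamma_beta \<beta> = real_of_rat g" and "0 < g" and "g < 1"
    and "0 < a" and "a < b" and "b < 1"
    and "b < seqval \<beta> (pre_per_seq (min_rot (farey_word (left_parent g)))
                                     (min_rot (farey_word g)))"
  shows "(a, b) \<in> D2 \<beta> \<inter> D1 \<beta> \<inter> D0 \<beta>"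
proof -
  obtain \<alpha>0 where \<alpha>0: "0 \<le> \<alpha>0" "\<alpha>0 < of_rat g"
    and tails: "\<And>\<alpha> k. \<alpha>0 \<le> \<alpha> \<Longrightarrow> \<alpha> < of_rat g \<Longrightarrow>
      b < seqval \<beta> (shift k (lower_mech \<alpha>)) \<and> seqval \<beta> (shift k (lower_mech \<alpha>)) < 1"
    using lower_mech_tails_above[OF assms(1-5,9)] by blast
  have "of_rat g \<le> (1::real)"
    using assms(5) of_rat_less_eq[of g 1] by simp
  moreover have "0 \<le> b"
    using assms(6,7) by simp
  ultimately have "uncountable (J_set \<beta> a b)" "finite (B_set \<beta> a b)"
    using uncountable_J_set[OF assms(1) _ \<alpha>0 _ tails] finite_B_set[OF assms(1) \<alpha>0 _ tails] by auto
  then show ?thesis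
    unfolding D0_def D1_def D2_def by auto
qed

end
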